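(* Let $\mathcal C$ be an essentially small additive category with cofibrations and $w$ an admissible class of morphisms in $\mathcal C$ such that $(\mathcal C,w)$ satisfies the factorization axiom. Then: (1) The class $w_{\mathrm{st}}|_{F_{wb}\mathcal C}$ of stable weak equivalences between weakly bounded filtered objects is the smallest admissible class of morphisms in $F_{wb}\mathcal C$ containing $lw|_{F_{wb}\mathcal C}$ and $\Theta_{F_{wb}\mathcal C}$. (2) $F_{wb}\mathcal C$ is the smallest $w_{\mathrm{st}}$-Serre subcategory of $F\mathcal C$ containing $\mathfrak j(\mathcal C)$. (3) For every morphism $f\colon x\to y$ in $F_{wb}\mathcal C$ with $x\in F_b\mathcal C$, there exists a factorization $f=p_f\circ i_f$ with $i_f\colon x\rightarrowtail u_f$ a level cofibration, $p_f\colon u_f\to y$ a stable weak equivalence, and $u_f\in F_b\mathcal C$.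
   Context: Admissible class: contains all isomorphisms, satisfies two-out-of-three, and for any commutative diagram of cofibration sequences with vertical maps $a,b,c$, two of $a,b,c$ in it implies the third is. Factorization axiom: every morphism factors as a cofibration followed by a morphism in $w$. $F\mathcal C$: functors $\mathbb N\to\mathcal C$ with $x_n=x(n)$, $i^x_n=x(n\le n+1)$, cofibrations = level cofibrations; $lw$ = level weak equivalences ($f_n\in w$ for all $n$); $w_{\mathrm{st}}$ = stable weak equivalences ($f_n\in w$ for all $n\ge N$ for some $N$). $x$ has amplitude in $[a,b]$ if $x_k=0$ for $k<a$ and $x_k=x_b$, $i^x_k=\mathrm{id}$ for $k\ge b$; $F_b\mathcal C$ = objects with amplitude in some $[a,b]$. $x$ is weakly bounded if there is $N$ with $i^x_n\in w$ for all $n\ge N$; $F_{wb}\mathcal C$ is the full subcategory of these. $\mathfrak j(x)$ is the constant filtered object at $x\in\mathcal C$ with identity transition maps; $\mathfrak j(\mathcal C)$ its image. The shift $x[1]$ has $x[1]_k=x_{k+1}$, $i^{x[1]}_k=i^x_{k+1}$; $\theta_x\colon x\to x[1]$ has components $(\theta_x)_k=i^x_k$; for a full subcategory $\mathcal D$ closed under shift, $\Theta_{\mathcal D}=\{\theta_x\}_{x\in\mathcal D}$. A $w_{\mathrm{st}}$-Serre subcategory of $F\mathcal C$ is a full subcategory such that for every level cofibration sequence two of $x,y,y/x$ in it implies the third is, and which is closed under finite zig-zags of stable weak equivalences. *)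

theory Defs
  imports Main
begin

record ('o,'m) ccat =
  Obj  :: "'o set"
  Arr  :: "'m set"
  dom  :: "'m \<Rightarrow> 'o"
  cod  :: "'m \<Rightarrow> 'o"
  comp :: "'m \<Rightarrow> 'm \<Rightarrow> 'm"   (* comp C g f = g \<circ> f *)
  idm  :: "'o \<Rightarrow> 'm"
  zero :: "'o"
  cofs :: "'m set"

definition hom :: "('o,'m) ccat \<Rightarrow> 'o \<Rightarrow> 'o \<Rightarrow> 'm set" where
  "hom C x y = {f \<in> Arr C. dom C f = x \<and> cod C f = y}"

definition is_category :: "('o,'m) ccat \<Rightarrow> bool" where
  "is_category C \<longleftrightarrow>
     (\<forall>f\<in>Arr C. dom C f \<in> Obj C \<and> cod C f \<in> Obj C) \<and>
     (\<forall>x\<in>Obj C. idm C x \<in> hom C x x) \<and>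
     (\<forall>f\<in>Arr C. \<forall>g\<in>Arr C. cod C f = dom C g \<longrightarrow> comp C g f \<in> hom C (dom C f) (cod C g)) \<and>
     (\<forall>f\<in>Arr C. \<forall>g\<in>Arr C. \<forall>h\<in>Arr C. cod C f = dom C g \<and> cod C g = dom C h \<longrightarrow>
         comp C h (comp C g f) = comp C (comp C h g) f) \<and>
     (\<forall>f\<in>Arr C. comp C f (idm C (dom C f)) = f \<and> comp C (idm C (cod C f)) f = f)"

definition is_zero_obj :: "('o,'m) ccat \<Rightarrow> 'o \<Rightarrow> bool" where
  "is_zero_obj C z \<longleftrightarrow> z \<in> Obj C \<and>
     (\<forall>x\<in>Obj C. (\<exists>!f. f \<in> hom C z x) \<and> (\<exists>!f. f \<in> hom C x z))"

definition to_zero :: "('o,'m) ccat \<Rightarrow> 'o \<Rightarrow> 'm" where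
  "to_zero C x = (THE f. f \<in> hom C x (zero C))"

definition from_zero :: "('o,'m) ccat \<Rightarrow> 'o \<Rightarrow> 'm" where
  "from_zero C y = (THE f. f \<in> hom C (zero C) y)"

definition zarr :: "('o,'m) ccat \<Rightarrow> 'o \<Rightarrow> 'o \<Rightarrow> 'm" where
  "zarr C x y = comp C (from_zero C y) (to_zero C x)"

definition is_iso :: "('o,'m) ccat \<Rightarrow> 'm \<Rightarrow> bool" where
  "is_iso C f \<longleftrightarrow> f \<in> Arr C \<and> (\<exists>g\<in>hom C (cod C f) (dom C f).
       comp C g f = idm C (dom C f) \<and> comp C f g = idm C (cod C f))"

definition is_pushout :: "('o,'m) ccat \<Rightarrow> 'm \<Rightarrow> 'm \<Rightarrow> 'm \<Rightarrow> 'm \<Rightarrow> bool" where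
  "is_pushout C i f j g \<longleftrightarrow>
     i \<in> Arr C \<and> f \<in> Arr C \<and> j \<in> Arr C \<and> g \<in> Arr C \<and>
     dom C f = dom C i \<and> dom C g = cod C i \<and> dom C j = cod C f \<and> cod C j = cod C g \<and>
     comp C g i = comp C j f \<and>
     (\<forall>t\<in>Obj C. \<forall>u\<in>hom C (cod C i) t. \<forall>v\<in>hom C (cod C f) t.
        comp C u i = comp C v f \<longrightarrow>
        (\<exists>!h. h \<in> hom C (cod C g) t \<and> comp C h g = u \<and> comp C h j = v))"

definition is_additive :: "('o,'m) ccat \<Rightarrow> bool" where
  "is_additive C \<longleftrightarrow> is_category C \<and> is_zero_obj C (zero C) \<and>
    (\<exists>add :: 'm \<Rightarrow> 'm \<Rightarrow> 'm.
      (\<forall>x\<in>Obj C. \<forall>y\<in>Obj C. \<forall>f\<in>hom C x y. \<forall>g\<in>hom C x y.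
          add f g \<in> hom C x y \<and> add f g = add g f \<and> add f (zarr C x y) = f \<and>
          (\<forall>h\<in>hom C x y. add (add f g) h = add f (add g h)) \<and>
          (\<exists>g'\<in>hom C x y. add f g' = zarr C x y)) \<and>
      (\<forall>x\<in>Obj C. \<forall>y\<in>Obj C. \<forall>z\<in>Obj C. \<forall>f\<in>hom C x y. \<forall>g\<in>hom C x y. \<forall>h\<in>hom C y z.
          comp C h (add f g) = add (comp C h f) (comp C h g)) \<and>
      (\<forall>x\<in>Obj C. \<forall>y\<in>Obj C. \<forall>z\<in>Obj C. \<forall>f\<in>hom C y z. \<forall>g\<in>hom C y z. \<forall>h\<in>hom C x y.
          comp C (add f g) h = add (comp C f h) (comp C g h)) \<and>
      (\<forall>a\<in>Obj C. \<forall>b\<in>Obj C. \<exists>s\<in>Obj C. \<exists>i1\<in>hom C a s. \<exists>i2\<in>hom C b s.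
          \<exists>p1\<in>hom C s a. \<exists>p2\<in>hom C s b.
          comp C p1 i1 = idm C a \<and> comp C p2 i2 = idm C b \<and>
          comp C p2 i1 = zarr C a b \<and> comp C p1 i2 = zarr C b a \<and>
          add (comp C i1 p1) (comp C i2 p2) = idm C s))"

text \<open>Category with cofibrations (Waldhausen's axioms without weak equivalences).\<close>
definition is_cat_with_cof :: "('o,'m) ccat \<Rightarrow> bool" where
  "is_cat_with_cof C \<longleftrightarrow> is_category C \<and> is_zero_obj C (zero C) \<and>
     cofs C \<subseteq> Arr C \<and>
     (\<forall>f. is_iso C f \<longrightarrow> f \<in> cofs C) \<and>
     (\<forall>f\<in>cofs C. \<forall>g\<in>cofs C. cod C f = dom C g \<longrightarrow> comp C g f \<in> cofs C) \<and>
     (\<forall>x\<in>Obj C. from_zero C x \<in> cofs C) \<and>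
     (\<forall>i\<in>cofs C. \<forall>f\<in>Arr C. dom C f = dom C i \<longrightarrow>
        (\<exists>j g. is_pushout C i f j g \<and> j \<in> cofs C))"

definition is_additive_cat_with_cof :: "('o,'m) ccat \<Rightarrow> bool" where
  "is_additive_cat_with_cof C \<longleftrightarrow> is_additive C \<and> is_cat_with_cof C"

text \<open>Cofibration sequence x >-> y ->> y/x : i cofibration, and the square
  (i, x -> 0, 0 -> z, p) is a pushout, i.e. z = y \<union>_x 0.\<close>
definition cofseq :: "('o,'m) ccat \<Rightarrow> 'm \<Rightarrow> 'm \<Rightarrow> bool" where
  "cofseq C i p \<longleftrightarrow> i \<in> cofs C \<and>
     is_pushout C i (to_zero C (dom C i)) (from_zero C (cod C p)) p"

definition admissible :: "('o,'m) ccat \<Rightarrow> 'm set \<Rightarrow> bool" where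
  "admissible C W \<longleftrightarrow> W \<subseteq> Arr C \<and>
     (\<forall>f. is_iso C f \<longrightarrow> f \<in> W) \<and>
     (\<forall>f\<in>Arr C. \<forall>g\<in>Arr C. cod C f = dom C g \<longrightarrow>
        (f \<in> W \<and> g \<in> W \<longrightarrow> comp C g f \<in> W) \<and>
        (f \<in> W \<and> comp C g f \<in> W \<longrightarrow> g \<in> W) \<and>
        (g \<in> W \<and> comp C g f \<in> W \<longrightarrow> f \<in> W)) \<and>
     (\<forall>i p i' p' a b c. cofseq C i p \<and> cofseq C i' p' \<and>
        a \<in> hom C (dom C i) (dom C i') \<and> b \<in> hom C (cod C i) (cod C i') \<and>
        c \<in> hom C (cod C p) (cod C p') \<and>
        comp C b i = comp C i' a \<and> comp C c p = comp C p' b \<longrightarrow>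
        (a \<in> W \<and> b \<in> W \<longrightarrow> c \<in> W) \<and>
        (a \<in> W \<and> c \<in> W \<longrightarrow> b \<in> W) \<and>
        (b \<in> W \<and> c \<in> W \<longrightarrow> a \<in> W))"

definition factorization_axiom :: "('o,'m) ccat \<Rightarrow> 'm set \<Rightarrow> bool" where
  "factorization_axiom C W \<longleftrightarrow>
     (\<forall>f\<in>Arr C. \<exists>i q. i \<in> cofs C \<and> q \<in> W \<and> q \<in> Arr C \<and>
        dom C i = dom C f \<and> cod C i = dom C q \<and> cod C q = cod C f \<and> comp C q i = f)"

text \<open>A filtered object is a pair (x, i) with x n an object and i n : x n -> x (n+1).\<close>
type_synonym ('o,'m) fobj = "(nat \<Rightarrow> 'o) \<times> (nat \<Rightarrow> 'm)"

record ('o,'m) fmor =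
  fdom  :: "('o,'m) fobj"
  fcod  :: "('o,'m) fobj"
  fcomp :: "nat \<Rightarrow> 'm"

definition fobjs :: "('o,'m) ccat \<Rightarrow> ('o,'m) fobj set" where
  "fobjs C = {(x, i). \<forall>n. x n \<in> Obj C \<and> i n \<in> hom C (x n) (x (Suc n))}"

definition FC :: "('o,'m) ccat \<Rightarrow> (('o,'m) fobj, ('o,'m) fmor) ccat" where
  "FC C = \<lparr> Obj = fobjs C,
      Arr = {f. fdom f \<in> fobjs C \<and> fcod f \<in> fobjs C \<and>
              (\<forall>n. fcomp f n \<in> hom C (fst (fdom f) n) (fst (fcod f) n) \<and>
                   comp C (snd (fcod f) n) (fcomp f n) = comp C (fcomp f (Suc n)) (snd (fdom f) n))},
      dom = fdom, cod = fcod,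
      comp = (\<lambda>g f. \<lparr> fdom = fdom f, fcod = fcod g, fcomp = (\<lambda>n. comp C (fcomp g n) (fcomp f n)) \<rparr>),
      idm = (\<lambda>x. \<lparr> fdom = x, fcod = x, fcomp = (\<lambda>n. idm C (fst x n)) \<rparr>),
      zero = ((\<lambda>n. zero C), (\<lambda>n. idm C (zero C))),
      cofs = {f. fdom f \<in> fobjs C \<and> fcod f \<in> fobjs C \<and>
              (\<forall>n. fcomp f n \<in> hom C (fst (fdom f) n) (fst (fcod f) n) \<and>
                   comp C (snd (fcod f) n) (fcomp f n) = comp C (fcomp f (Suc n)) (snd (fdom f) n)) \<and>
              (\<forall>n. fcomp f n \<in> cofs C)} \<rparr>"

definition fullsub :: "('o,'m) ccat \<Rightarrow> 'o set \<Rightarrow> ('o,'m) ccat" where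
  "fullsub D S = D\<lparr> Obj := S,
      Arr := {f \<in> Arr D. dom D f \<in> S \<and> cod D f \<in> S},
      cofs := {f \<in> cofs D. dom D f \<in> S \<and> cod D f \<in> S} \<rparr>"

definition lw :: "('o,'m) ccat \<Rightarrow> 'm set \<Rightarrow> ('o,'m) fmor set" where
  "lw C W = {f \<in> Arr (FC C). \<forall>n. fcomp f n \<in> W}"

definition wst :: "('o,'m) ccat \<Rightarrow> 'm set \<Rightarrow> ('o,'m) fmor set" where
  "wst C W = {f \<in> Arr (FC C). \<exists>N. \<forall>n\<ge>N. fcomp f n \<in> W}"

text \<open>Objects with amplitude in some [a,b]; x_k = 0 means equal to the chosen zero object.\<close>
definition Fb :: "('o,'m) ccat \<Rightarrow> ('o,'m) fobj set" where
  "Fb C = {(x, i) \<in> fobjs C. \<exists>a b. a \<le> b \<and>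
      (\<forall>k<a. x k = zero C) \<and> (\<forall>k\<ge>b. x k = x b \<and> i k = idm C (x b))}"

definition Fwb :: "('o,'m) ccat \<Rightarrow> 'm set \<Rightarrow> ('o,'m) fobj set" where
  "Fwb C W = {(x, i) \<in> fobjs C. \<exists>N. \<forall>n\<ge>N. i n \<in> W}"

definition FwbC :: "('o,'m) ccat \<Rightarrow> 'm set \<Rightarrow> (('o,'m) fobj, ('o,'m) fmor) ccat" where
  "FwbC C W = fullsub (FC C) (Fwb C W)"

definition jconst :: "('o,'m) ccat \<Rightarrow> 'o \<Rightarrow> ('o,'m) fobj" where
  "jconst C c = ((\<lambda>n. c), (\<lambda>n. idm C c))"

definition shift :: "('o,'m) fobj \<Rightarrow> ('o,'m) fobj" where
  "shift X = ((\<lambda>k. fst X (Suc k)), (\<lambda>k. snd X (Suc k)))"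

definition theta :: "('o,'m) fobj \<Rightarrow> ('o,'m) fmor" where
  "theta X = \<lparr> fdom = X, fcod = shift X, fcomp = snd X \<rparr>"

definition Theta :: "('o,'m) fobj set \<Rightarrow> ('o,'m) fmor set" where
  "Theta D = theta ` D"

definition wst_serre :: "('o,'m) ccat \<Rightarrow> 'm set \<Rightarrow> ('o,'m) fobj set \<Rightarrow> bool" where
  "wst_serre C W S \<longleftrightarrow> S \<subseteq> Obj (FC C) \<and>
     (\<forall>i p. cofseq (FC C) i p \<longrightarrow>
        (let x = fdom i; y = fcod i; z = fcod p in
          (x \<in> S \<and> y \<in> S \<longrightarrow> z \<in> S) \<and> (x \<in> S \<and> z \<in> S \<longrightarrow> y \<in> S) \<and>
          (y \<in> S \<and> z \<in> S \<longrightarrow> x \<in> S))) \<and>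
     (\<forall>x y. x \<in> S \<and>
        (\<lambda>a b. \<exists>f\<in>wst C W. (fdom f = a \<and> fcod f = b) \<or> (fdom f = b \<and> fcod f = a))\<^sup>*\<^sup>* x y
        \<longrightarrow> y \<in> S)"

end

theory Submission
  imports Defs
begin

text \<open>
  Stable weak equivalences are levelwise weak equivalences in all large degrees, and \<open>X\<close> is weakly
  bounded exactly when \<open>\<theta>\<^sub>X\<close> is a stable weak equivalence; so everything reduces to properties of
  \<open>w\<close> in each degree. The object \<open>upto_obj C n t\<close> corepresents evaluation at degree \<open>n\<close>, hence a
  cofibration sequence in any full subcategory of \<open>FC\<close> containing these objects, such as
  \<open>Fwb C w\<close>, is a cofibration sequence in every degree, and admissibility and the Serre property
  are inherited from \<open>w\<close>.

  For minimality, a stable weak equivalence \<open>f\<close> that lies in \<open>w\<close> from degree \<open>N\<close> on fits into the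
  naturality square \<open>\<theta>\<^sup>N \<circ> f = f[N] \<circ> \<theta>\<^sup>N\<close> with \<open>f[N]\<close> a level weak equivalence, and a weakly
  bounded \<open>X\<close> is joined to the constant object on \<open>X\<^sub>N\<close> by the zig-zag
  \<open>X \<leftarrow> truncation C X N \<rightarrow> jconst C X\<^sub>N\<close> of stable weak equivalences. Finally, \<open>f : X \<rightarrow> Y\<close> with
  \<open>X\<close> bounded is factored by factoring \<open>f\<^sub>M = q \<circ> j\<close> in \<open>C\<close> at a degree \<open>M\<close> beyond the amplitude
  of \<open>X\<close> and the weak bound of \<open>Y\<close>, and splicing \<open>j\<close> onto \<open>X\<close>.
\<close>

section \<open>Filtered objects\<close>

lemma fmor_eqI:
  fixes f g :: "('o,'m) fmor"
  shows "fdom f = fdom g \<Longrightarrow> fcod f = fcod g \<Longrightarrow> (\<And>n. fcomp f n = fcomp g n) \<Longrightarrow> f = g"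
  by (cases f, cases g) auto

lemma FC_simps [simp]:
  "Obj (FC C) = fobjs C" "dom (FC C) = fdom" "cod (FC C) = fcod"
  "idm (FC C) X = \<lparr>fdom = X, fcod = X, fcomp = (\<lambda>n. idm C (fst X n))\<rparr>"
  "zero (FC C) = ((\<lambda>n. zero C), (\<lambda>n. idm C (zero C)))"
  by (simp_all add: FC_def)

lemma comp_FC_simps [simp]:
  "fdom (comp (FC C) g f) = fdom f" "fcod (comp (FC C) g f) = fcod g"
  "fcomp (comp (FC C) g f) n = comp C (fcomp g n) (fcomp f n)"
  by (simp_all add: FC_def)

lemma Arr_FC_iff:
  "f \<in> Arr (FC C) \<longleftrightarrow> fdom f \<in> fobjs C \<and> fcod f \<in> fobjs C \<and>
     (\<forall>n. fcomp f n \<in> hom C (fst (fdom f) n) (fst (fcod f) n) \<and>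
          comp C (snd (fcod f) n) (fcomp f n) = comp C (fcomp f (Suc n)) (snd (fdom f) n))"
  by (simp add: FC_def)

lemma cofs_FC_iff: "f \<in> cofs (FC C) \<longleftrightarrow> f \<in> Arr (FC C) \<and> (\<forall>n. fcomp f n \<in> cofs C)"
  by (auto simp add: FC_def)

lemma hom_FC: "hom (FC C) X Y = {f \<in> Arr (FC C). fdom f = X \<and> fcod f = Y}"
  by (simp add: hom_def)

lemma fullsub_simps [simp]:
  "Obj (fullsub D S) = S" "Arr (fullsub D S) = {f \<in> Arr D. dom D f \<in> S \<and> cod D f \<in> S}"
  "dom (fullsub D S) = dom D" "cod (fullsub D S) = cod D" "comp (fullsub D S) = comp D"
  "idm (fullsub D S) = idm D" "zero (fullsub D S) = zero D"
  "cofs (fullsub D S) = {f \<in> cofs D. dom D f \<in> S \<and> cod D f \<in> S}"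
  by (simp_all add: fullsub_def)

lemma hom_fullsub: "x \<in> S \<Longrightarrow> y \<in> S \<Longrightarrow> hom (fullsub D S) x y = hom D x y"
  by (auto simp add: hom_def)

lemma to_zero_fullsub: "zero D \<in> S \<Longrightarrow> x \<in> S \<Longrightarrow> to_zero (fullsub D S) x = to_zero D x"
  by (simp add: to_zero_def hom_fullsub)

lemma from_zero_fullsub: "zero D \<in> S \<Longrightarrow> x \<in> S \<Longrightarrow> from_zero (fullsub D S) x = from_zero D x"
  by (simp add: from_zero_def hom_fullsub)

lemma fullsub_FC_fobjs: "fullsub (FC C) (fobjs C) = FC C"
  unfolding fullsub_def FC_def by auto

lemma fobjs_iff: "X \<in> fobjs C \<longleftrightarrow> (\<forall>n. fst X n \<in> Obj C \<and> snd X n \<in> hom C (fst X n) (fst X (Suc n)))"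
  by (cases X) (simp add: fobjs_def)

lemma Fwb_iff: "X \<in> Fwb C w \<longleftrightarrow> X \<in> fobjs C \<and> (\<forall>\<^sub>F n in sequentially. snd X n \<in> w)"
  by (cases X) (simp add: Fwb_def eventually_sequentially)

lemma wst_iff: "f \<in> wst C w \<longleftrightarrow> f \<in> Arr (FC C) \<and> (\<forall>\<^sub>F n in sequentially. fcomp f n \<in> w)"
  by (simp add: wst_def eventually_sequentially)

lemma Fb_iff: "X \<in> Fb C \<longleftrightarrow> X \<in> fobjs C \<and> (\<exists>a b. a \<le> b \<and>
      (\<forall>k<a. fst X k = zero C) \<and> (\<forall>k\<ge>b. fst X k = fst X b \<and> snd X k = idm C (fst X b)))"
  by (cases X) (simp add: Fb_def)

lemma admissible_compD:
  "admissible D W \<Longrightarrow> f \<in> W \<Longrightarrow> g \<in> W \<Longrightarrow> cod D f = dom D g \<Longrightarrow> comp D g f \<in> W"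
  unfolding admissible_def by blast

lemma admissible_cancel_leftD:
  "admissible D W \<Longrightarrow> f \<in> Arr D \<Longrightarrow> g \<in> W \<Longrightarrow> cod D f = dom D g \<Longrightarrow> comp D g f \<in> W \<Longrightarrow> f \<in> W"
  unfolding admissible_def by blast

primrec transition :: "('o,'m) ccat \<Rightarrow> ('o,'m) fobj \<Rightarrow> nat \<Rightarrow> nat \<Rightarrow> 'm" where
  "transition C X k 0 = idm C (fst X k)"
| "transition C X k (Suc d) = comp C (snd X (k + d)) (transition C X k d)"

locale zero_category =
  fixes C :: "('o,'m) ccat"
  assumes category: "is_category C" and zero_object: "is_zero_obj C (zero C)"
begin

lemma homD: "f \<in> hom C x y \<Longrightarrow> f \<in> Arr C \<and> dom C f = x \<and> cod C f = y"
  by (simp add: hom_def)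

lemma hom_Obj: "f \<in> hom C x y \<Longrightarrow> x \<in> Obj C \<and> y \<in> Obj C"
  using category unfolding is_category_def hom_def by auto

lemma comp_in_hom: "f \<in> hom C x y \<Longrightarrow> g \<in> hom C y z \<Longrightarrow> comp C g f \<in> hom C x z"
  using category unfolding is_category_def hom_def by auto

lemma id_in_hom: "x \<in> Obj C \<Longrightarrow> idm C x \<in> hom C x x"
  using category unfolding is_category_def by auto

lemma comp_assoc: "f \<in> hom C x y \<Longrightarrow> g \<in> hom C y z \<Longrightarrow> h \<in> hom C z u \<Longrightarrow>
    comp C h (comp C g f) = comp C (comp C h g) f"
  using category unfolding is_category_def hom_def by auto

lemma id_comp: "f \<in> hom C x y \<Longrightarrow> comp C (idm C y) f = f"
  using category unfolding is_category_def hom_def by auto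

lemma comp_id: "f \<in> hom C x y \<Longrightarrow> comp C f (idm C x) = f"
  using category unfolding is_category_def hom_def by auto

lemma id_is_iso: "x \<in> Obj C \<Longrightarrow> is_iso C (idm C x)"
  using id_in_hom id_comp homD unfolding is_iso_def by metis

lemma zero_in_Obj: "zero C \<in> Obj C"
  using zero_object unfolding is_zero_obj_def by auto

lemma to_zero_in_hom: "x \<in> Obj C \<Longrightarrow> to_zero C x \<in> hom C x (zero C)"
  using zero_object unfolding is_zero_obj_def to_zero_def by (metis theI')

lemma from_zero_in_hom: "x \<in> Obj C \<Longrightarrow> from_zero C x \<in> hom C (zero C) x"
  using zero_object unfolding is_zero_obj_def from_zero_def by (metis theI')

lemma hom_to_zero_eq: "f \<in> hom C x (zero C) \<Longrightarrow> f = to_zero C x"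
  using zero_object hom_Obj to_zero_in_hom unfolding is_zero_obj_def by metis

lemma hom_from_zero_eq: "f \<in> hom C (zero C) x \<Longrightarrow> f = from_zero C x"
  using zero_object hom_Obj from_zero_in_hom unfolding is_zero_obj_def by metis

lemma hom_to_zero_unique: "f \<in> hom C x (zero C) \<Longrightarrow> g \<in> hom C x (zero C) \<Longrightarrow> f = g"
  using hom_to_zero_eq by metis

lemma hom_from_zero_unique: "f \<in> hom C (zero C) x \<Longrightarrow> g \<in> hom C (zero C) x \<Longrightarrow> f = g"
  using hom_from_zero_eq by metis

lemma to_zero_zero: "to_zero C (zero C) = idm C (zero C)"
  using hom_to_zero_eq[OF id_in_hom[OF zero_in_Obj]] by simp

lemma fobj_Obj: "X \<in> fobjs C \<Longrightarrow> fst X n \<in> Obj C"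
  by (simp add: fobjs_iff)

lemma fobj_hom: "X \<in> fobjs C \<Longrightarrow> snd X n \<in> hom C (fst X n) (fst X (Suc n))"
  by (simp add: fobjs_iff)

lemma Arr_FCD:
  assumes "f \<in> Arr (FC C)"
  shows "fdom f \<in> fobjs C" "fcod f \<in> fobjs C"
    "fcomp f n \<in> hom C (fst (fdom f) n) (fst (fcod f) n)"
    "comp C (snd (fcod f) n) (fcomp f n) = comp C (fcomp f (Suc n)) (snd (fdom f) n)"
  using assms by (simp_all add: Arr_FC_iff)

lemma transition_in_hom: "X \<in> fobjs C \<Longrightarrow> transition C X k d \<in> hom C (fst X k) (fst X (k + d))"
  by (induction d) (auto intro: comp_in_hom fobj_hom id_in_hom fobj_Obj)

lemma transition_Suc_left:
  assumes X: "X \<in> fobjs C"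
  shows "transition C X k (Suc d) = comp C (transition C X (Suc k) d) (snd X k)"
proof (induction d)
  case 0
  show ?case using id_comp[OF fobj_hom[OF X]] comp_id[OF fobj_hom[OF X]] by simp
next
  case (Suc d)
  have "transition C X k (Suc (Suc d))
      = comp C (snd X (Suc (k + d))) (comp C (transition C X (Suc k) d) (snd X k))"
    using Suc by simp
  also have "\<dots> = comp C (transition C X (Suc k) (Suc d)) (snd X k)"
    using comp_assoc[OF fobj_hom[OF X] transition_in_hom[OF X, of "Suc k" d] fobj_hom[OF X]] by simp
  finally show ?case .
qed

lemma transition_natural:
  assumes f: "f \<in> Arr (FC C)"
  shows "comp C (transition C (fcod f) k d) (fcomp f k) = comp C (fcomp f (k + d)) (transition C (fdom f) k d)"
proof (induction d)
  case 0
  show ?case using id_comp[OF Arr_FCD(3)[OF f]] comp_id[OF Arr_FCD(3)[OF f]] by simp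
next
  case (Suc d)
  note X = Arr_FCD(1)[OF f] and Y = Arr_FCD(2)[OF f]
  have "comp C (transition C (fcod f) k (Suc d)) (fcomp f k)
      = comp C (snd (fcod f) (k + d)) (comp C (transition C (fcod f) k d) (fcomp f k))"
    using comp_assoc[OF Arr_FCD(3)[OF f] transition_in_hom[OF Y] fobj_hom[OF Y]] by simp
  also have "\<dots> = comp C (comp C (snd (fcod f) (k + d)) (fcomp f (k + d))) (transition C (fdom f) k d)"
    using Suc comp_assoc[OF transition_in_hom[OF X] Arr_FCD(3)[OF f] fobj_hom[OF Y]] by simp
  also have "\<dots> = comp C (fcomp f (k + Suc d)) (transition C (fdom f) k (Suc d))"
    using Arr_FCD(4)[OF f] comp_assoc[OF transition_in_hom[OF X] fobj_hom[OF X] Arr_FCD(3)[OF f]] by simp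
  finally show ?case .
qed

lemma comp_in_Arr_FC:
  assumes f: "f \<in> Arr (FC C)" and g: "g \<in> Arr (FC C)" and fg: "fcod f = fdom g"
  shows "comp (FC C) g f \<in> Arr (FC C)"
proof -
  have "comp C (snd (fcod g) n) (comp C (fcomp g n) (fcomp f n))
      = comp C (comp C (fcomp g (Suc n)) (fcomp f (Suc n))) (snd (fdom f) n)" for n
  proof -
    note hf = Arr_FCD(3)[OF f, unfolded fg] and hg = Arr_FCD(3)[OF g]
    have "comp C (snd (fcod g) n) (comp C (fcomp g n) (fcomp f n))
        = comp C (comp C (fcomp g (Suc n)) (snd (fdom g) n)) (fcomp f n)"
      using comp_assoc[OF hf hg fobj_hom[OF Arr_FCD(2)[OF g]]] Arr_FCD(4)[OF g] by simp
    also have "\<dots> = comp C (fcomp g (Suc n)) (comp C (fcomp f (Suc n)) (snd (fdom f) n))"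
      using comp_assoc[OF hf fobj_hom[OF Arr_FCD(1)[OF g]] hg] Arr_FCD(4)[OF f] fg by simp
    also have "\<dots> = comp C (comp C (fcomp g (Suc n)) (fcomp f (Suc n))) (snd (fdom f) n)"
      using comp_assoc[OF fobj_hom[OF Arr_FCD(1)[OF f]] hf hg] by simp
    finally show ?thesis .
  qed
  then show ?thesis
    using f g fg by (auto simp add: Arr_FC_iff intro: comp_in_hom)
qed

end

section \<open>Levelwise cofibration sequences\<close>

definition to_zeroF :: "('o,'m) ccat \<Rightarrow> ('o,'m) fobj \<Rightarrow> ('o,'m) fmor" where
  "to_zeroF C X = \<lparr>fdom = X, fcod = zero (FC C), fcomp = (\<lambda>k. to_zero C (fst X k))\<rparr>"

definition from_zeroF :: "('o,'m) ccat \<Rightarrow> ('o,'m) fobj \<Rightarrow> ('o,'m) fmor" where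
  "from_zeroF C X = \<lparr>fdom = zero (FC C), fcod = X, fcomp = (\<lambda>k. from_zero C (fst X k))\<rparr>"

text \<open>Maps \<open>X \<rightarrow> upto_obj C n t\<close>
  are the same as maps \<open>X\<^sub>n \<rightarrow> t\<close> (\<open>Arr_to_upto_eq\<close>), so a full subcategory of \<open>FC\<close> containing
  these objects sees the universal property of every level.\<close>

definition upto_obj :: "('o,'m) ccat \<Rightarrow> nat \<Rightarrow> 'o \<Rightarrow> ('o,'m) fobj" where
  "upto_obj C n t = ((\<lambda>k. if k \<le> n then t else zero C),
                 (\<lambda>k. if k < n then idm C t else to_zero C (if k \<le> n then t else zero C)))"

definition upto_map :: "('o,'m) ccat \<Rightarrow> ('o,'m) fobj \<Rightarrow> nat \<Rightarrow> 'o \<Rightarrow> 'm \<Rightarrow> ('o,'m) fmor" where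
  "upto_map C X n t g = \<lparr>fdom = X, fcod = upto_obj C n t,
     fcomp = (\<lambda>k. if k \<le> n then comp C g (transition C X k (n - k)) else to_zero C (fst X k))\<rparr>"

lemma to_zeroF_simps [simp]:
  "fdom (to_zeroF C X) = X" "fcod (to_zeroF C X) = zero (FC C)" "fcomp (to_zeroF C X) k = to_zero C (fst X k)"
  by (simp_all add: to_zeroF_def)

lemma from_zeroF_simps [simp]:
  "fdom (from_zeroF C X) = zero (FC C)" "fcod (from_zeroF C X) = X" "fcomp (from_zeroF C X) k = from_zero C (fst X k)"
  by (simp_all add: from_zeroF_def)

lemma upto_map_simps [simp]:
  "fdom (upto_map C X n t g) = X" "fcod (upto_map C X n t g) = upto_obj C n t"
  by (simp_all add: upto_map_def)

context zero_category
begin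

lemma zero_FC_fobj: "zero (FC C) \<in> fobjs C"
  using zero_in_Obj id_in_hom by (simp add: fobjs_iff)

lemma to_zeroF_Arr:
  assumes X: "X \<in> fobjs C"
  shows "to_zeroF C X \<in> Arr (FC C)"
proof -
  have "comp C (idm C (zero C)) (to_zero C (fst X n)) = comp C (to_zero C (fst X (Suc n))) (snd X n)" for n
    by (rule hom_to_zero_unique)
      (use X in \<open>auto intro: comp_in_hom fobj_hom id_in_hom zero_in_Obj to_zero_in_hom fobj_Obj\<close>)
  then show ?thesis
    using X zero_FC_fobj by (simp add: Arr_FC_iff to_zeroF_def to_zero_in_hom fobj_Obj)
qed

lemma from_zeroF_Arr:
  assumes X: "X \<in> fobjs C"
  shows "from_zeroF C X \<in> Arr (FC C)"
proof -
  have "comp C (snd X n) (from_zero C (fst X n)) = comp C (from_zero C (fst X (Suc n))) (idm C (zero C))" for n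
    by (rule hom_from_zero_unique)
      (use X in \<open>auto intro: comp_in_hom fobj_hom id_in_hom zero_in_Obj from_zero_in_hom fobj_Obj\<close>)
  then show ?thesis
    using X zero_FC_fobj by (simp add: Arr_FC_iff from_zeroF_def from_zero_in_hom fobj_Obj)
qed

lemma Arr_FC_to_zero_eq:
  assumes f: "f \<in> Arr (FC C)" and "fcod f = zero (FC C)"
  shows "f = to_zeroF C (fdom f)"
  by (rule fmor_eqI) (use assms Arr_FCD(3)[OF f] in \<open>simp_all add: to_zeroF_def hom_to_zero_eq\<close>)

lemma Arr_FC_from_zero_eq:
  assumes f: "f \<in> Arr (FC C)" and "fdom f = zero (FC C)"
  shows "f = from_zeroF C (fcod f)"
  by (rule fmor_eqI) (use assms Arr_FCD(3)[OF f] in \<open>simp_all add: from_zeroF_def hom_from_zero_eq\<close>)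

lemma to_zero_FC: "X \<in> fobjs C \<Longrightarrow> to_zero (FC C) X = to_zeroF C X"
  unfolding to_zero_def hom_FC
  by (rule the_equality) (auto simp add: to_zeroF_Arr Arr_FC_to_zero_eq)

lemma from_zero_FC: "X \<in> fobjs C \<Longrightarrow> from_zero (FC C) X = from_zeroF C X"
  unfolding from_zero_def hom_FC
  by (rule the_equality) (auto simp add: from_zeroF_Arr Arr_FC_from_zero_eq)

lemma upto_obj_fobj: "t \<in> Obj C \<Longrightarrow> upto_obj C n t \<in> fobjs C"
  by (simp add: fobjs_iff upto_obj_def zero_in_Obj id_in_hom to_zero_in_hom)

lemma transition_upto_obj: "t \<in> Obj C \<Longrightarrow> k + d \<le> n \<Longrightarrow> transition C (upto_obj C n t) k d = idm C t"
  by (induction d) (simp_all add: upto_obj_def id_comp[OF id_in_hom])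

lemma upto_map_at: "g \<in> hom C (fst X n) t \<Longrightarrow> fcomp (upto_map C X n t g) n = g"
  by (simp add: upto_map_def comp_id)

lemma upto_map_Arr:
  assumes X: "X \<in> fobjs C" and t: "t \<in> Obj C" and g: "g \<in> hom C (fst X n) t"
  shows "upto_map C X n t g \<in> Arr (FC C)"
proof -
  let ?G = "upto_map C X n t g" and ?T = "upto_obj C n t"
  have G: "fcomp ?G k \<in> hom C (fst X k) (fst ?T k)" for k
    using transition_in_hom[OF X, of k "n - k"] g X
    by (auto simp add: upto_map_def upto_obj_def intro: comp_in_hom to_zero_in_hom fobj_Obj)
  have "comp C (snd ?T k) (fcomp ?G k) = comp C (fcomp ?G (Suc k)) (snd X k)" for k
  proof (cases "k < n")
    case True
    have "transition C X k (n - k) = comp C (transition C X (Suc k) (n - Suc k)) (snd X k)"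
      using transition_Suc_left[OF X, of k "n - Suc k"] True by (simp add: Suc_diff_Suc)
    moreover have "comp C (idm C t) (fcomp ?G k) = fcomp ?G k"
      using G[of k] True id_comp by (simp add: upto_obj_def)
    ultimately show ?thesis
      using True comp_assoc[OF fobj_hom[OF X] transition_in_hom[OF X, of "Suc k" "n - Suc k"]] g
      by (simp add: upto_map_def upto_obj_def)
  next
    case False
    then have "fst ?T (Suc k) = zero C" by (simp add: upto_obj_def)
    then show ?thesis
      using comp_in_hom[OF G[of k] fobj_hom[OF upto_obj_fobj[OF t, of n], of k]]
        comp_in_hom[OF fobj_hom[OF X, of k] G[of "Suc k"]]
      by (metis hom_to_zero_unique)
  qed
  then show ?thesis
    using G X upto_obj_fobj[OF t] by (simp add: Arr_FC_iff upto_map_def)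
qed

lemma Arr_to_upto_eq:
  assumes f: "f \<in> Arr (FC C)" and cod: "fcod f = upto_obj C n t" and t: "t \<in> Obj C"
  shows "f = upto_map C (fdom f) n t (fcomp f n)"
proof (rule fmor_eqI)
  fix k
  have fk: "fcomp f k \<in> hom C (fst (fdom f) k) (fst (upto_obj C n t) k)"
    using Arr_FCD(3)[OF f] cod by simp
  show "fcomp f k = fcomp (upto_map C (fdom f) n t (fcomp f n)) k"
  proof (cases "k \<le> n")
    case True
    have "fcomp f k = comp C (transition C (fcod f) k (n - k)) (fcomp f k)"
      using True fk cod transition_upto_obj[OF t, of k "n - k" n] id_comp by (simp add: upto_obj_def)
    then show ?thesis
      using True transition_natural[OF f, of k "n - k"] by (simp add: upto_map_def)
  next
    case False
    then show ?thesis using fk by (simp add: upto_map_def upto_obj_def hom_to_zero_eq)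
  qed
qed (simp_all add: upto_map_def cod)

lemma from_zeroF_comp_eq:
  assumes h: "h \<in> hom (FC C) Z T"
  shows "comp (FC C) h (from_zeroF C Z) = from_zeroF C T"
proof -
  have "Z \<in> fobjs C" "h \<in> Arr (FC C)" using h Arr_FCD(1) by (auto simp add: hom_FC)
  then have "comp (FC C) h (from_zeroF C Z) \<in> Arr (FC C)"
    using h by (intro comp_in_Arr_FC) (auto simp add: hom_FC from_zeroF_Arr)
  then show ?thesis
    using h Arr_FC_from_zero_eq by (fastforce simp add: hom_FC)
qed

lemma cofseq_fullsubD:
  assumes S: "S \<subseteq> fobjs C" "zero (FC C) \<in> S" and cs: "cofseq (fullsub (FC C) S) i p"
  shows "i \<in> Arr (FC C)" "p \<in> Arr (FC C)" "fdom p = fcod i" "fdom i \<in> S" "fcod p \<in> S"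
    "fcomp i n \<in> cofs C"
    "comp (FC C) p i = comp (FC C) (from_zeroF C (fcod p)) (to_zeroF C (fdom i))"
    "\<lbrakk>T \<in> S; u \<in> hom (FC C) (fcod i) T;
      comp (FC C) u i = comp (FC C) (from_zeroF C T) (to_zeroF C (fdom i))\<rbrakk>
     \<Longrightarrow> \<exists>!h. h \<in> hom (FC C) (fcod p) T \<and> comp (FC C) h p = u"
proof -
  have i: "i \<in> cofs (FC C)" "fdom i \<in> S" "fcod i \<in> S"
    using cs by (auto simp add: cofseq_def)
  then show "i \<in> Arr (FC C)" "fdom i \<in> S" "fcomp i n \<in> cofs C"
    by (simp_all add: cofs_FC_iff)
  have "fcod p \<in> S"
    using cs by (auto simp add: cofseq_def is_pushout_def)
  then have po: "is_pushout (fullsub (FC C) S) i (to_zeroF C (fdom i)) (from_zeroF C (fcod p)) p"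
    using cs i S unfolding cofseq_def
    by (simp add: to_zero_fullsub from_zero_fullsub subsetD[OF S(1)] to_zero_FC from_zero_FC)
  then show p: "p \<in> Arr (FC C)" "fdom p = fcod i" "fcod p \<in> S"
    and "comp (FC C) p i = comp (FC C) (from_zeroF C (fcod p)) (to_zeroF C (fdom i))"
    by (auto simp add: is_pushout_def)
  assume T: "T \<in> S" and u: "u \<in> hom (FC C) (fcod i) T"
    and ui: "comp (FC C) u i = comp (FC C) (from_zeroF C T) (to_zeroF C (fdom i))"
  have "from_zeroF C T \<in> hom (FC C) (zero (FC C)) T"
    using T S from_zeroF_Arr[OF subsetD[OF S(1) T]] by (simp add: hom_FC)
  then have "\<exists>!h. h \<in> hom (FC C) (fcod p) T \<and> comp (FC C) h p = u \<and>
      comp (FC C) h (from_zeroF C (fcod p)) = from_zeroF C T"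
    using po T u ui i(3) p(3) S(2) unfolding is_pushout_def by (simp add: hom_fullsub)
  then show "\<exists>!h. h \<in> hom (FC C) (fcod p) T \<and> comp (FC C) h p = u"
    using from_zeroF_comp_eq by metis
qed

lemma cofseq_level_universal:
  assumes S: "S \<subseteq> fobjs C" "zero (FC C) \<in> S" "\<And>t. t \<in> Obj C \<Longrightarrow> upto_obj C n t \<in> S"
    and cs: "cofseq (fullsub (FC C) S) i p"
    and t: "t \<in> Obj C" and u: "u \<in> hom C (fst (fcod i) n) t"
    and ui: "comp C u (fcomp i n) = zarr C (fst (fdom i) n) t"
  shows "\<exists>!h. h \<in> hom C (fst (fcod p) n) t \<and> comp C h (fcomp p n) = u"
proof -
  note D = cofseq_fullsubD[OF S(1,2) cs]
  let ?T = "upto_obj C n t" and ?U = "upto_map C (fcod i) n t u"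
  have X: "fdom i \<in> fobjs C" "fcod i \<in> fobjs C" "fcod p \<in> fobjs C"
    using Arr_FCD(1,2) D(1,2) by auto
  have U: "?U \<in> hom (FC C) (fcod i) ?T"
    using upto_map_Arr[OF X(2) t u] by (simp add: hom_FC)
  have "comp (FC C) ?U i = upto_map C (fdom i) n t (zarr C (fst (fdom i) n) t)"
    using Arr_to_upto_eq[OF comp_in_Arr_FC[OF D(1) upto_map_Arr[OF X(2) t u]] _ t]
    by (simp add: upto_map_at[OF u] ui)
  moreover have "comp (FC C) (from_zeroF C ?T) (to_zeroF C (fdom i))
      = upto_map C (fdom i) n t (zarr C (fst (fdom i) n) t)"
    using Arr_to_upto_eq[OF comp_in_Arr_FC[OF to_zeroF_Arr[OF X(1)] from_zeroF_Arr[OF upto_obj_fobj[OF t]]] _ t]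
    by (simp add: zarr_def upto_obj_def)
  ultimately obtain H where H: "H \<in> hom (FC C) (fcod p) ?T" "comp (FC C) H p = ?U"
    and H_unique: "\<And>H'. H' \<in> hom (FC C) (fcod p) ?T \<Longrightarrow> comp (FC C) H' p = ?U \<Longrightarrow> H' = H"
    using D(8)[OF S(3)[OF t] U] by metis
  show ?thesis
  proof (rule ex1I[of _ "fcomp H n"])
    show "fcomp H n \<in> hom C (fst (fcod p) n) t \<and> comp C (fcomp H n) (fcomp p n) = u"
    proof
      show "fcomp H n \<in> hom C (fst (fcod p) n) t"
        using H(1) Arr_FCD(3)[of H n] by (auto simp add: hom_FC upto_obj_def)
      show "comp C (fcomp H n) (fcomp p n) = u"
        using arg_cong[OF H(2), of "\<lambda>f. fcomp f n"] upto_map_at[OF u] by simp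
    qed
  next
    fix h
    assume h: "h \<in> hom C (fst (fcod p) n) t \<and> comp C h (fcomp p n) = u"
    have "upto_map C (fcod p) n t h = H"
    proof (rule H_unique)
      show "upto_map C (fcod p) n t h \<in> hom (FC C) (fcod p) ?T"
        using upto_map_Arr[OF X(3) t] h by (simp add: hom_FC)
      show "comp (FC C) (upto_map C (fcod p) n t h) p = ?U"
        using Arr_to_upto_eq[OF comp_in_Arr_FC[OF D(2) upto_map_Arr[OF X(3) t]] _ t] h D(3)
        by (simp add: upto_map_at)
    qed
    then show "h = fcomp H n"
      using upto_map_at h by metis
  qed
qed

lemma cofseq_levelwise:
  assumes S: "S \<subseteq> fobjs C" "zero (FC C) \<in> S" "\<And>n t. t \<in> Obj C \<Longrightarrow> upto_obj C n t \<in> S"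
    and cs: "cofseq (fullsub (FC C) S) i p"
  shows "cofseq C (fcomp i n) (fcomp p n)"
proof -
  note D = cofseq_fullsubD[OF S(1,2) cs]
  have X: "fst (fdom i) n \<in> Obj C" "fst (fcod p) n \<in> Obj C"
    using Arr_FCD(1,2) D(1,2) fobj_Obj by auto
  have hi: "fcomp i n \<in> hom C (fst (fdom i) n) (fst (fcod i) n)"
    and hp: "fcomp p n \<in> hom C (fst (fcod i) n) (fst (fcod p) n)"
    using Arr_FCD(3) D(1-3) by metis+
  have ends: "dom C (fcomp i n) = fst (fdom i) n" "cod C (fcomp i n) = fst (fcod i) n"
    "dom C (fcomp p n) = fst (fcod i) n" "cod C (fcomp p n) = fst (fcod p) n"
    using homD[OF hi] homD[OF hp] by simp_all
  have sq: "comp C (fcomp p n) (fcomp i n) = zarr C (fst (fdom i) n) (fst (fcod p) n)"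
    using arg_cong[OF D(7), of "\<lambda>f. fcomp f n"] by (simp add: zarr_def)
  show ?thesis
    unfolding cofseq_def is_pushout_def ends
  proof (intro conjI ballI impI)
    fix t u v
    assume t: "t \<in> Obj C" and u: "u \<in> hom C (fst (fcod i) n) t"
      and v: "v \<in> hom C (cod C (to_zero C (fst (fdom i) n))) t"
      and uv: "comp C u (fcomp i n) = comp C v (to_zero C (fst (fdom i) n))"
    have v0: "v = from_zero C t"
      using v homD[OF to_zero_in_hom[OF X(1)]] hom_from_zero_eq by simp
    have "\<exists>!h. h \<in> hom C (fst (fcod p) n) t \<and> comp C h (fcomp p n) = u"
      using cofseq_level_universal[OF S(1,2,3) cs t u] uv v0 by (simp add: zarr_def)
    moreover have "comp C h (from_zero C (fst (fcod p) n)) = v" if "h \<in> hom C (fst (fcod p) n) t" for h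
      using comp_in_hom[OF from_zero_in_hom[OF X(2)] that] v0 hom_from_zero_eq by simp
    ultimately show "\<exists>!h. h \<in> hom C (fst (fcod p) n) t \<and> comp C h (fcomp p n) = u \<and>
        comp C h (from_zero C (fst (fcod p) n)) = v"
      by blast
  qed (use D(6) hi hp sq to_zero_in_hom[OF X(1)] from_zero_in_hom[OF X(2)] in
        \<open>auto simp add: hom_def zarr_def\<close>)
qed

end

section \<open>Stable weak equivalences\<close>

locale admissible_class = zero_category +
  fixes w :: "'m set"
  assumes admissible: "admissible C w"
begin

lemma iso_in_w: "is_iso C f \<Longrightarrow> f \<in> w"
  using admissible unfolding admissible_def by auto

lemma id_in_w: "x \<in> Obj C \<Longrightarrow> idm C x \<in> w"
  by (rule iso_in_w[OF id_is_iso])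

lemma w_comp: "f \<in> hom C x y \<Longrightarrow> g \<in> hom C y z \<Longrightarrow> f \<in> w \<Longrightarrow> g \<in> w \<Longrightarrow> comp C g f \<in> w"
  using admissible unfolding admissible_def hom_def by auto

lemma w_cancel_right: "f \<in> hom C x y \<Longrightarrow> g \<in> hom C y z \<Longrightarrow> f \<in> w \<Longrightarrow> comp C g f \<in> w \<Longrightarrow> g \<in> w"
  using admissible unfolding admissible_def hom_def by auto

lemma w_cancel_left: "f \<in> hom C x y \<Longrightarrow> g \<in> hom C y z \<Longrightarrow> g \<in> w \<Longrightarrow> comp C g f \<in> w \<Longrightarrow> f \<in> w"
  using admissible unfolding admissible_def hom_def by auto

lemma w_cofseq:
  "\<lbrakk>cofseq C i p; cofseq C i' p';
    a \<in> hom C (dom C i) (dom C i'); b \<in> hom C (cod C i) (cod C i'); c \<in> hom C (cod C p) (cod C p');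
    comp C b i = comp C i' a; comp C c p = comp C p' b\<rbrakk> \<Longrightarrow>
   (a \<in> w \<and> b \<in> w \<longrightarrow> c \<in> w) \<and> (a \<in> w \<and> c \<in> w \<longrightarrow> b \<in> w) \<and> (b \<in> w \<and> c \<in> w \<longrightarrow> a \<in> w)"
  using admissible unfolding admissible_def by blast

lemma transition_in_w:
  assumes X: "X \<in> fobjs C" and N: "\<forall>n\<ge>N. snd X n \<in> w" and k: "N \<le> k"
  shows "transition C X k d \<in> w"
proof (induction d)
  case 0
  show ?case using id_in_w fobj_Obj[OF X] by simp
next
  case (Suc d)
  show ?case
    using w_comp[OF transition_in_hom[OF X] fobj_hom[OF X] Suc] N k by simp
qed

lemma wst_two_out_of_three:
  assumes f: "f \<in> Arr (FC C)" and g: "g \<in> Arr (FC C)" and fg: "fcod f = fdom g"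
  shows "(f \<in> wst C w \<and> g \<in> wst C w \<longrightarrow> comp (FC C) g f \<in> wst C w) \<and>
         (f \<in> wst C w \<and> comp (FC C) g f \<in> wst C w \<longrightarrow> g \<in> wst C w) \<and>
         (g \<in> wst C w \<and> comp (FC C) g f \<in> wst C w \<longrightarrow> f \<in> wst C w)"
proof -
  have hf: "fcomp f n \<in> hom C (fst (fdom f) n) (fst (fdom g) n)" for n
    using Arr_FCD(3)[OF f] fg by simp
  note hg = Arr_FCD(3)[OF g]
  show ?thesis
    unfolding wst_iff using f g comp_in_Arr_FC[OF f g fg]
    by (auto elim: eventually_elim2 intro: w_comp[OF hf hg] w_cancel_right[OF hf hg] w_cancel_left[OF hf hg])
qed

lemma wst_cofseq_two_out_of_three:
  assumes cs: "\<And>n. cofseq C (fcomp i n) (fcomp p n)" "\<And>n. cofseq C (fcomp i' n) (fcomp p' n)"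
    and arrs: "i \<in> Arr (FC C)" "p \<in> Arr (FC C)" "i' \<in> Arr (FC C)" "p' \<in> Arr (FC C)"
      "fdom p = fcod i" "fdom p' = fcod i'"
    and a: "a \<in> hom (FC C) (fdom i) (fdom i')" and b: "b \<in> hom (FC C) (fcod i) (fcod i')"
    and c: "c \<in> hom (FC C) (fcod p) (fcod p')"
    and sq: "comp (FC C) b i = comp (FC C) i' a" "comp (FC C) c p = comp (FC C) p' b"
  shows "(a \<in> wst C w \<and> b \<in> wst C w \<longrightarrow> c \<in> wst C w) \<and>
         (a \<in> wst C w \<and> c \<in> wst C w \<longrightarrow> b \<in> wst C w) \<and>
         (b \<in> wst C w \<and> c \<in> wst C w \<longrightarrow> a \<in> wst C w)"
proof -
  have level: "(fcomp a n \<in> w \<and> fcomp b n \<in> w \<longrightarrow> fcomp c n \<in> w) \<and>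
      (fcomp a n \<in> w \<and> fcomp c n \<in> w \<longrightarrow> fcomp b n \<in> w) \<and>
      (fcomp b n \<in> w \<and> fcomp c n \<in> w \<longrightarrow> fcomp a n \<in> w)" for n
  proof (rule w_cofseq[OF cs])
    have ends: "dom C (fcomp i n) = fst (fdom i) n" "cod C (fcomp i n) = fst (fcod i) n"
      "dom C (fcomp i' n) = fst (fdom i') n" "cod C (fcomp i' n) = fst (fcod i') n"
      "cod C (fcomp p n) = fst (fcod p) n" "cod C (fcomp p' n) = fst (fcod p') n"
      using arrs Arr_FCD(3) homD by metis+
    show "fcomp a n \<in> hom C (dom C (fcomp i n)) (dom C (fcomp i' n))"
      "fcomp b n \<in> hom C (cod C (fcomp i n)) (cod C (fcomp i' n))"
      "fcomp c n \<in> hom C (cod C (fcomp p n)) (cod C (fcomp p' n))"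
      unfolding ends using a b c Arr_FCD(3)[of a n] Arr_FCD(3)[of b n] Arr_FCD(3)[of c n]
      by (auto simp add: hom_FC)
    show "comp C (fcomp b n) (fcomp i n) = comp C (fcomp i' n) (fcomp a n)"
      "comp C (fcomp c n) (fcomp p n) = comp C (fcomp p' n) (fcomp b n)"
      using sq[THEN arg_cong, of "\<lambda>f. fcomp f n"] by simp_all
  qed
  have "a \<in> Arr (FC C)" "b \<in> Arr (FC C)" "c \<in> Arr (FC C)"
    using a b c by (simp_all add: hom_FC)
  then show ?thesis
    unfolding wst_iff using level
      eventually_elim2[of "\<lambda>n. fcomp a n \<in> w" _ "\<lambda>n. fcomp b n \<in> w" "\<lambda>n. fcomp c n \<in> w"]
      eventually_elim2[of "\<lambda>n. fcomp a n \<in> w" _ "\<lambda>n. fcomp c n \<in> w" "\<lambda>n. fcomp b n \<in> w"]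
      eventually_elim2[of "\<lambda>n. fcomp b n \<in> w" _ "\<lambda>n. fcomp c n \<in> w" "\<lambda>n. fcomp a n \<in> w"]
    by blast
qed

lemma is_iso_fullsub_levelwise:
  assumes iso: "is_iso (fullsub (FC C) S) f"
  shows "is_iso C (fcomp f n)"
proof -
  obtain g where f: "f \<in> Arr (FC C)" and g: "g \<in> Arr (FC C)" "fdom g = fcod f" "fcod g = fdom f"
    and gf: "comp (FC C) g f = idm (FC C) (fdom f)" and fg: "comp (FC C) f g = idm (FC C) (fcod f)"
    using iso by (auto simp add: is_iso_def hom_def)
  have hf: "fcomp f n \<in> hom C (fst (fdom f) n) (fst (fcod f) n)"
    and hg: "fcomp g n \<in> hom C (fst (fcod f) n) (fst (fdom f) n)"
    using Arr_FCD(3)[OF f] Arr_FCD(3)[OF g(1)] g(2,3) by simp_all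
  have "comp C (fcomp g n) (fcomp f n) = idm C (fst (fdom f) n)"
    "comp C (fcomp f n) (fcomp g n) = idm C (fst (fcod f) n)"
    using gf[THEN arg_cong, of "\<lambda>f. fcomp f n"] fg[THEN arg_cong, of "\<lambda>f. fcomp f n"] by simp_all
  then show ?thesis
    unfolding is_iso_def using homD[OF hf] hg by auto
qed

lemma wst_cofseq_fullsub:
  assumes S: "S \<subseteq> fobjs C" "zero (FC C) \<in> S" "\<And>n t. t \<in> Obj C \<Longrightarrow> upto_obj C n t \<in> S"
    and cs: "cofseq (fullsub (FC C) S) i p" "cofseq (fullsub (FC C) S) i' p'"
    and a: "a \<in> hom (FC C) (fdom i) (fdom i')" and b: "b \<in> hom (FC C) (fcod i) (fcod i')"
    and c: "c \<in> hom (FC C) (fcod p) (fcod p')"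
    and sq: "comp (FC C) b i = comp (FC C) i' a" "comp (FC C) c p = comp (FC C) p' b"
  shows "(a \<in> wst C w \<and> b \<in> wst C w \<longrightarrow> c \<in> wst C w) \<and>
         (a \<in> wst C w \<and> c \<in> wst C w \<longrightarrow> b \<in> wst C w) \<and>
         (b \<in> wst C w \<and> c \<in> wst C w \<longrightarrow> a \<in> wst C w)"
proof (rule wst_cofseq_two_out_of_three)
  show "cofseq C (fcomp i n) (fcomp p n)" for n
    by (rule cofseq_levelwise[OF S cs(1)])
  show "cofseq C (fcomp i' n) (fcomp p' n)" for n
    by (rule cofseq_levelwise[OF S cs(2)])
  show "i \<in> Arr (FC C)" "p \<in> Arr (FC C)" "fdom p = fcod i"
    using cofseq_fullsubD(1-3)[OF S(1,2) cs(1)] by simp_all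
  show "i' \<in> Arr (FC C)" "p' \<in> Arr (FC C)" "fdom p' = fcod i'"
    using cofseq_fullsubD(1-3)[OF S(1,2) cs(2)] by simp_all
qed (fact a, fact b, fact c, fact sq(1), fact sq(2))

lemma admissible_wst_fullsub:
  assumes S: "S \<subseteq> fobjs C" "zero (FC C) \<in> S" "\<And>n t. t \<in> Obj C \<Longrightarrow> upto_obj C n t \<in> S"
  shows "admissible (fullsub (FC C) S) (wst C w \<inter> Arr (fullsub (FC C) S))"
proof -
  let ?D = "fullsub (FC C) S"
  let ?W = "wst C w \<inter> Arr ?D"
  have iso: "f \<in> ?W" if iso: "is_iso ?D f" for f
  proof -
    have "f \<in> Arr ?D"
      using iso unfolding is_iso_def by (rule conjunct1)
    then show ?thesis
      using iso_in_w[OF is_iso_fullsub_levelwise[OF iso]] by (simp add: wst_iff always_eventually)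
  qed
  have comp: "(f \<in> ?W \<and> g \<in> ?W \<longrightarrow> comp ?D g f \<in> ?W) \<and> (f \<in> ?W \<and> comp ?D g f \<in> ?W \<longrightarrow> g \<in> ?W) \<and>
      (g \<in> ?W \<and> comp ?D g f \<in> ?W \<longrightarrow> f \<in> ?W)"
    if "f \<in> Arr ?D" "g \<in> Arr ?D" "cod ?D f = dom ?D g" for f g
  proof -
    have fg: "f \<in> Arr (FC C)" "g \<in> Arr (FC C)" "fcod f = fdom g"
      using that by auto
    moreover have "comp (FC C) g f \<in> Arr ?D"
      using that comp_in_Arr_FC[OF fg] by simp
    ultimately show ?thesis
      unfolding fullsub_simps(5) using wst_two_out_of_three[OF fg] that(1,2) by blast
  qed
  have cof: "(a \<in> ?W \<and> b \<in> ?W \<longrightarrow> c \<in> ?W) \<and> (a \<in> ?W \<and> c \<in> ?W \<longrightarrow> b \<in> ?W) \<and>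
      (b \<in> ?W \<and> c \<in> ?W \<longrightarrow> a \<in> ?W)"
    if cs: "cofseq ?D i p" "cofseq ?D i' p'"
      and abc: "a \<in> hom ?D (dom ?D i) (dom ?D i')" "b \<in> hom ?D (cod ?D i) (cod ?D i')"
        "c \<in> hom ?D (cod ?D p) (cod ?D p')"
      and sq: "comp ?D b i = comp ?D i' a" "comp ?D c p = comp ?D p' b"
    for i p i' p' a b c
  proof -
    have homs: "a \<in> hom (FC C) (fdom i) (fdom i')" "b \<in> hom (FC C) (fcod i) (fcod i')"
      "c \<in> hom (FC C) (fcod p) (fcod p')" and arrs: "a \<in> Arr ?D" "b \<in> Arr ?D" "c \<in> Arr ?D"
      using abc by (auto simp add: hom_def)
    have "comp (FC C) b i = comp (FC C) i' a" "comp (FC C) c p = comp (FC C) p' b"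
      using sq by simp_all
    then show ?thesis
      using wst_cofseq_fullsub[OF S cs homs] arrs by blast
  qed
  show ?thesis
    unfolding admissible_def using iso comp cof by blast
qed

end

section \<open>Weakly bounded objects\<close>

definition shift_by :: "('o,'m) fobj \<Rightarrow> nat \<Rightarrow> ('o,'m) fobj" where
  "shift_by X N = ((\<lambda>k. fst X (k + N)), (\<lambda>k. snd X (k + N)))"

definition shift_mor :: "('o,'m) fmor \<Rightarrow> nat \<Rightarrow> ('o,'m) fmor" where
  "shift_mor f N = \<lparr>fdom = shift_by (fdom f) N, fcod = shift_by (fcod f) N, fcomp = (\<lambda>k. fcomp f (k + N))\<rparr>"

definition theta_pow :: "('o,'m) ccat \<Rightarrow> ('o,'m) fobj \<Rightarrow> nat \<Rightarrow> ('o,'m) fmor" where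
  "theta_pow C X N = \<lparr>fdom = X, fcod = shift_by X N, fcomp = (\<lambda>k. transition C X k N)\<rparr>"

lemma shift_by_simps [simp]: "fst (shift_by X N) k = fst X (k + N)" "snd (shift_by X N) k = snd X (k + N)"
  by (simp_all add: shift_by_def)

lemma shift_mor_simps [simp]:
  "fdom (shift_mor f N) = shift_by (fdom f) N" "fcod (shift_mor f N) = shift_by (fcod f) N"
  "fcomp (shift_mor f N) k = fcomp f (k + N)"
  by (simp_all add: shift_mor_def)

lemma theta_pow_simps [simp]:
  "fdom (theta_pow C X N) = X" "fcod (theta_pow C X N) = shift_by X N"
  "fcomp (theta_pow C X N) k = transition C X k N"
  by (simp_all add: theta_pow_def)

lemma shift_by_1: "shift_by X 1 = shift X"
  by (simp add: shift_by_def shift_def)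

context zero_category
begin

lemma shift_by_fobj: "X \<in> fobjs C \<Longrightarrow> shift_by X N \<in> fobjs C"
  by (simp add: fobjs_iff)

lemma shift_mor_Arr: "f \<in> Arr (FC C) \<Longrightarrow> shift_mor f N \<in> Arr (FC C)"
  by (simp add: Arr_FC_iff shift_by_fobj)

lemma theta_pow_Arr:
  assumes X: "X \<in> fobjs C"
  shows "theta_pow C X N \<in> Arr (FC C)"
proof -
  have "comp C (snd X (n + N)) (transition C X n N) = comp C (transition C X (Suc n) N) (snd X n)" for n
    using transition_Suc_left[OF X, of n N] by simp
  then show ?thesis
    using X shift_by_fobj[OF X] transition_in_hom[OF X] by (simp add: Arr_FC_iff)
qed

lemma theta_pow_1: "X \<in> fobjs C \<Longrightarrow> theta_pow C X 1 = theta X"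
  by (rule fmor_eqI) (simp_all add: theta_def shift_by_def shift_def comp_id[OF fobj_hom])

lemma theta_pow_Suc: "theta_pow C X (Suc N) = comp (FC C) (theta (shift_by X N)) (theta_pow C X N)"
  by (rule fmor_eqI) (simp_all add: theta_def shift_def shift_by_def add.commute)

lemma theta_pow_natural:
  "f \<in> Arr (FC C) \<Longrightarrow>
    comp (FC C) (theta_pow C (fcod f) N) f = comp (FC C) (shift_mor f N) (theta_pow C (fdom f) N)"
  by (rule fmor_eqI) (simp_all add: transition_natural)

lemma cofseq_FCD:
  assumes "cofseq (FC C) i p"
  shows "i \<in> Arr (FC C)" "p \<in> Arr (FC C)" "fdom p = fcod i" "cofseq C (fcomp i n) (fcomp p n)"
proof -
  have cs: "cofseq (fullsub (FC C) (fobjs C)) i p"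
    using assms by (simp add: fullsub_FC_fobjs)
  show "i \<in> Arr (FC C)" "p \<in> Arr (FC C)" "fdom p = fcod i"
    using cofseq_fullsubD(1-3)[OF order_refl zero_FC_fobj cs] by simp_all
  show "cofseq C (fcomp i n) (fcomp p n)"
    by (rule cofseq_levelwise[OF order_refl zero_FC_fobj upto_obj_fobj cs])
qed

end

context admissible_class
begin

lemma Fwb_iff_theta_pow: "X \<in> fobjs C \<Longrightarrow> X \<in> Fwb C w \<longleftrightarrow> theta_pow C X 1 \<in> wst C w"
  by (simp add: Fwb_iff wst_iff theta_pow_Arr comp_id[OF fobj_hom])

lemma shift_mor_wst: "f \<in> wst C w \<Longrightarrow> shift_mor f N \<in> wst C w"
  using eventually_sequentially_seg[where P = "\<lambda>n. fcomp f n \<in> w"] by (simp add: wst_iff shift_mor_Arr)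

lemma shift_by_Fwb: "X \<in> Fwb C w \<Longrightarrow> shift_by X N \<in> Fwb C w"
  using eventually_sequentially_seg[where P = "\<lambda>n. snd X n \<in> w"] by (simp add: Fwb_iff shift_by_fobj)

lemma wst_Fwb_iff:
  assumes f: "f \<in> wst C w"
  shows "fdom f \<in> Fwb C w \<longleftrightarrow> fcod f \<in> Fwb C w"
proof -
  have fA: "f \<in> Arr (FC C)" using f by (simp add: wst_iff)
  note X = Arr_FCD(1)[OF fA] and Y = Arr_FCD(2)[OF fA]
  have "theta_pow C (fcod f) 1 \<in> wst C w \<longleftrightarrow> comp (FC C) (theta_pow C (fcod f) 1) f \<in> wst C w"
    using wst_two_out_of_three[OF fA theta_pow_Arr[OF Y]] f by simp blast
  also have "\<dots> \<longleftrightarrow> theta_pow C (fdom f) 1 \<in> wst C w"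
    unfolding theta_pow_natural[OF fA]
    using wst_two_out_of_three[OF theta_pow_Arr[OF X] shift_mor_Arr[OF fA]] shift_mor_wst[OF f]
    by simp blast
  finally show ?thesis
    using Fwb_iff_theta_pow[OF X] Fwb_iff_theta_pow[OF Y] by simp
qed

lemma Fwb_cofseq_two_out_of_three:
  assumes cs: "cofseq (FC C) i p"
  shows "(fdom i \<in> Fwb C w \<and> fcod i \<in> Fwb C w \<longrightarrow> fcod p \<in> Fwb C w) \<and>
         (fdom i \<in> Fwb C w \<and> fcod p \<in> Fwb C w \<longrightarrow> fcod i \<in> Fwb C w) \<and>
         (fcod i \<in> Fwb C w \<and> fcod p \<in> Fwb C w \<longrightarrow> fdom i \<in> Fwb C w)"
proof -
  note D = cofseq_FCD(1-3)[OF cs]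
  note objs = Arr_FCD(1,2)[OF D(1)] Arr_FCD(2)[OF D(2)]
  let ?\<theta> = "\<lambda>X. theta_pow C X 1"
  have "(?\<theta> (fdom i) \<in> wst C w \<and> ?\<theta> (fcod i) \<in> wst C w \<longrightarrow> ?\<theta> (fcod p) \<in> wst C w) \<and>
    (?\<theta> (fdom i) \<in> wst C w \<and> ?\<theta> (fcod p) \<in> wst C w \<longrightarrow> ?\<theta> (fcod i) \<in> wst C w) \<and>
    (?\<theta> (fcod i) \<in> wst C w \<and> ?\<theta> (fcod p) \<in> wst C w \<longrightarrow> ?\<theta> (fdom i) \<in> wst C w)"
  proof (rule wst_cofseq_two_out_of_three)
    show "cofseq C (fcomp i n) (fcomp p n)" "cofseq C (fcomp (shift_mor i 1) n) (fcomp (shift_mor p 1) n)"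
      for n
      using cofseq_FCD(4)[OF cs] by simp_all
    show "i \<in> Arr (FC C)" "p \<in> Arr (FC C)" "shift_mor i 1 \<in> Arr (FC C)" "shift_mor p 1 \<in> Arr (FC C)"
      "fdom p = fcod i" "fdom (shift_mor p 1) = fcod (shift_mor i 1)"
      using D shift_mor_Arr by simp_all
    show "?\<theta> (fdom i) \<in> hom (FC C) (fdom i) (fdom (shift_mor i 1))"
      "?\<theta> (fcod i) \<in> hom (FC C) (fcod i) (fcod (shift_mor i 1))"
      "?\<theta> (fcod p) \<in> hom (FC C) (fcod p) (fcod (shift_mor p 1))"
      using objs theta_pow_Arr by (simp_all add: hom_FC)
    show "comp (FC C) (?\<theta> (fcod i)) i = comp (FC C) (shift_mor i 1) (?\<theta> (fdom i))"
      "comp (FC C) (?\<theta> (fcod p)) p = comp (FC C) (shift_mor p 1) (?\<theta> (fcod i))"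
      using theta_pow_natural[OF D(1)] theta_pow_natural[OF D(2)] D(3) by simp_all
  qed
  then show ?thesis
    unfolding Fwb_iff_theta_pow[OF objs(1)] Fwb_iff_theta_pow[OF objs(2)] Fwb_iff_theta_pow[OF objs(3)] .
qed

lemma Fwb_fobjs: "Fwb C w \<subseteq> fobjs C"
  by (auto simp add: Fwb_iff)

lemma zero_Fwb: "zero (FC C) \<in> Fwb C w"
  using zero_FC_fobj id_in_w zero_in_Obj by (simp add: Fwb_iff)

lemma upto_obj_Fwb:
  assumes t: "t \<in> Obj C"
  shows "upto_obj C n t \<in> Fwb C w"
proof -
  have "\<forall>k\<ge>Suc n. snd (upto_obj C n t) k \<in> w"
    using id_in_w[OF zero_in_Obj] by (simp add: upto_obj_def to_zero_zero)
  then show ?thesis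
    using upto_obj_fobj[OF t] by (auto simp add: Fwb_iff eventually_sequentially)
qed

lemma jconst_Fwb: "jconst C ` Obj C \<subseteq> Fwb C w"
  using id_in_hom id_in_w by (auto simp add: jconst_def Fwb_iff fobjs_iff)

lemma wst_serre_Fwb: "wst_serre C w (Fwb C w)"
  unfolding wst_serre_def Let_def
proof (intro conjI)
  show "Fwb C w \<subseteq> Obj (FC C)"
    using Fwb_fobjs by simp
  show "\<forall>i p. cofseq (FC C) i p \<longrightarrow>
      (fdom i \<in> Fwb C w \<and> fcod i \<in> Fwb C w \<longrightarrow> fcod p \<in> Fwb C w) \<and>
      (fdom i \<in> Fwb C w \<and> fcod p \<in> Fwb C w \<longrightarrow> fcod i \<in> Fwb C w) \<and>
      (fcod i \<in> Fwb C w \<and> fcod p \<in> Fwb C w \<longrightarrow> fdom i \<in> Fwb C w)"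
    using Fwb_cofseq_two_out_of_three by blast
  show "\<forall>x y. x \<in> Fwb C w \<and>
      (\<lambda>a b. \<exists>f\<in>wst C w. fdom f = a \<and> fcod f = b \<or> fdom f = b \<and> fcod f = a)\<^sup>*\<^sup>* x y \<longrightarrow> y \<in> Fwb C w"
  proof (intro allI impI, elim conjE)
    fix x y
    assume "(\<lambda>a b. \<exists>f\<in>wst C w. fdom f = a \<and> fcod f = b \<or> fdom f = b \<and> fcod f = a)\<^sup>*\<^sup>* x y"
      and "x \<in> Fwb C w"
    then show "y \<in> Fwb C w"
      by (induction rule: rtranclp_induct) (auto dest: wst_Fwb_iff)
  qed
qed

lemma theta_wst_FwbC:
  assumes X: "X \<in> Fwb C w"
  shows "theta X \<in> wst C w \<inter> Arr (FwbC C w)"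
proof -
  have X': "X \<in> fobjs C" using X Fwb_fobjs by blast
  have "theta X \<in> wst C w" "theta X \<in> Arr (FC C)"
    using theta_pow_1[OF X'] Fwb_iff_theta_pow[OF X'] X theta_pow_Arr[OF X', of 1] by simp_all
  moreover have "shift X \<in> Fwb C w"
    using shift_by_Fwb[OF X, of 1] by (simp only: shift_by_1)
  ultimately show ?thesis
    using X by (simp add: FwbC_def theta_def)
qed

lemma theta_pow_in_admissible:
  assumes W: "admissible (FwbC C w) W" "Theta (Fwb C w) \<subseteq> W" and X: "X \<in> Fwb C w"
  shows "theta_pow C X (Suc N) \<in> W"
proof (induction N)
  case 0
  have "theta_pow C X 1 = theta X"
    using X Fwb_fobjs theta_pow_1 by blast
  then show ?case
    using W(2) X by (auto simp add: Theta_def)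
next
  case (Suc N)
  have "theta (shift_by X (Suc N)) \<in> W"
    using W(2) shift_by_Fwb[OF X] by (auto simp add: Theta_def)
  then have "comp (FC C) (theta (shift_by X (Suc N))) (theta_pow C X (Suc N)) \<in> W"
    using admissible_compD[OF W(1) Suc] by (simp add: FwbC_def theta_def)
  then show ?case
    unfolding theta_pow_Suc[of X "Suc N"] .
qed

lemma wst_minimal:
  assumes W: "admissible (FwbC C w) W" "lw C w \<inter> Arr (FwbC C w) \<subseteq> W" "Theta (Fwb C w) \<subseteq> W"
    and f: "f \<in> wst C w \<inter> Arr (FwbC C w)"
  shows "f \<in> W"
proof -
  have fA: "f \<in> Arr (FC C)" "fdom f \<in> Fwb C w" "fcod f \<in> Fwb C w"
    using f by (simp_all add: FwbC_def)
  obtain N where N: "\<forall>n\<ge>N. fcomp f n \<in> w"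
    using f by (auto simp add: wst_iff eventually_sequentially)
  have "shift_mor f (Suc N) \<in> lw C w \<inter> Arr (FwbC C w)"
    using N shift_mor_Arr[OF fA(1)] shift_by_Fwb fA by (simp add: lw_def FwbC_def)
  then have "comp (FwbC C w) (shift_mor f (Suc N)) (theta_pow C (fdom f) (Suc N)) \<in> W"
    using W theta_pow_in_admissible[OF W(1,3) fA(2)] admissible_compD[OF W(1)]
    by (simp add: FwbC_def subset_iff)
  then have "comp (FwbC C w) (theta_pow C (fcod f) (Suc N)) f \<in> W"
    by (simp add: FwbC_def theta_pow_natural[OF fA(1)])
  then show ?thesis
    using f theta_pow_in_admissible[OF W(1,3) fA(3)]
    by (intro admissible_cancel_leftD[OF W(1), of f "theta_pow C (fcod f) (Suc N)"])
      (simp_all add: FwbC_def)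
qed

end

definition truncation :: "('o,'m) ccat \<Rightarrow> ('o,'m) fobj \<Rightarrow> nat \<Rightarrow> ('o,'m) fobj" where
  "truncation C X N = ((\<lambda>k. fst X (min k N)), (\<lambda>k. if k < N then snd X k else idm C (fst X N)))"

definition truncation_incl :: "('o,'m) ccat \<Rightarrow> ('o,'m) fobj \<Rightarrow> nat \<Rightarrow> ('o,'m) fmor" where
  "truncation_incl C X N = \<lparr>fdom = truncation C X N, fcod = X,
     fcomp = (\<lambda>k. transition C X (min k N) (k - N))\<rparr>"

definition truncation_proj :: "('o,'m) ccat \<Rightarrow> ('o,'m) fobj \<Rightarrow> nat \<Rightarrow> ('o,'m) fmor" where
  "truncation_proj C X N = \<lparr>fdom = truncation C X N, fcod = jconst C (fst X N),
     fcomp = (\<lambda>k. transition C X (min k N) (N - k))\<rparr>"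

context zero_category
begin

lemma truncation_fobj:
  assumes X: "X \<in> fobjs C"
  shows "truncation C X N \<in> fobjs C"
  using fobj_hom[OF X] fobj_Obj[OF X] id_in_hom[OF fobj_Obj[OF X]]
  by (auto simp add: fobjs_iff truncation_def min_def Suc_le_eq not_less_eq_eq)

lemma truncation_incl_Arr:
  assumes X: "X \<in> fobjs C"
  shows "truncation_incl C X N \<in> Arr (FC C)"
proof -
  have hom: "transition C X (min k N) (k - N) \<in> hom C (fst X (min k N)) (fst X k)" for k
    using transition_in_hom[OF X, of "min k N" "k - N"] by (cases "k \<le> N") (simp_all add: min_def)
  have "comp C (snd X k) (transition C X (min k N) (k - N))
      = comp C (transition C X (min (Suc k) N) (Suc k - N)) (snd (truncation C X N) k)" for k
  proof (cases "k < N")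
    case True
    then show ?thesis
      using comp_id[OF fobj_hom[OF X]] id_comp[OF fobj_hom[OF X]]
      by (simp add: truncation_def min_def Suc_le_eq)
  next
    case False
    then show ?thesis
      using comp_id[OF hom[of "Suc k"]] by (simp add: truncation_def min_def Suc_diff_le)
  qed
  then show ?thesis
    using hom X truncation_fobj[OF X] by (simp add: Arr_FC_iff truncation_incl_def truncation_def)
qed

lemma truncation_proj_Arr:
  assumes X: "X \<in> fobjs C"
  shows "truncation_proj C X N \<in> Arr (FC C)"
proof -
  have XN: "fst X N \<in> Obj C" by (rule fobj_Obj[OF X])
  have hom: "transition C X (min k N) (N - k) \<in> hom C (fst X (min k N)) (fst X N)" for k
    using transition_in_hom[OF X, of "min k N" "N - k"] by (cases "k \<le> N") (simp_all add: min_def)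
  have "comp C (idm C (fst X N)) (transition C X (min k N) (N - k))
      = comp C (transition C X (min (Suc k) N) (N - Suc k)) (snd (truncation C X N) k)" for k
  proof (cases "k < N")
    case True
    then have "transition C X k (N - k) = comp C (transition C X (Suc k) (N - Suc k)) (snd X k)"
      using transition_Suc_left[OF X, of k "N - Suc k"] by (simp add: Suc_diff_Suc)
    then show ?thesis
      using True id_comp[OF hom[of k]] by (simp add: truncation_def min_def Suc_le_eq)
  next
    case False
    then show ?thesis
      using id_comp[OF id_in_hom[OF XN]] by (simp add: truncation_def min_def)
  qed
  then show ?thesis
    using hom X XN truncation_fobj[OF X] id_in_hom
    by (simp add: Arr_FC_iff truncation_proj_def truncation_def jconst_def fobjs_iff)
qed

end

context admissible_class
begin

lemma Fwb_minimal:
  assumes S: "wst_serre C w S" "jconst C ` Obj C \<subseteq> S" and X: "X \<in> Fwb C w"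
  shows "X \<in> S"
proof -
  obtain N where N: "\<forall>n\<ge>N. snd X n \<in> w" and X': "X \<in> fobjs C"
    using X by (auto simp add: Fwb_iff eventually_sequentially)
  have "\<forall>n\<ge>N. fcomp (truncation_incl C X N) n \<in> w"
    using transition_in_w[OF X' N order_refl] by (simp add: truncation_incl_def min_absorb2)
  then have incl: "truncation_incl C X N \<in> wst C w"
    using truncation_incl_Arr[OF X'] by (auto simp add: wst_iff eventually_sequentially)
  have "\<forall>n\<ge>N. fcomp (truncation_proj C X N) n \<in> w"
    using id_in_w[OF fobj_Obj[OF X']] by (simp add: truncation_proj_def min_absorb2)
  then have proj: "truncation_proj C X N \<in> wst C w"
    using truncation_proj_Arr[OF X'] by (auto simp add: wst_iff eventually_sequentially)
  let ?R = "\<lambda>a b. \<exists>f\<in>wst C w. fdom f = a \<and> fcod f = b \<or> fdom f = b \<and> fcod f = a"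
  have to_const: "?R (jconst C (fst X N)) (truncation C X N)"
    using proj by (intro bexI[of _ "truncation_proj C X N"]) (simp_all add: truncation_proj_def)
  have to_X: "?R (truncation C X N) X"
    using incl by (intro bexI[of _ "truncation_incl C X N"]) (simp_all add: truncation_incl_def)
  have "?R\<^sup>*\<^sup>* (jconst C (fst X N)) X"
    by (rule rtranclp.rtrancl_into_rtrancl[OF r_into_rtranclp[of ?R, OF to_const] to_X])
  moreover have "jconst C (fst X N) \<in> S"
    using S(2) fobj_Obj[OF X'] by blast
  ultimately show ?thesis
    using S(1) unfolding wst_serre_def by blast
qed

end

section \<open>Factorization\<close>

definition constant_from :: "('o,'m) ccat \<Rightarrow> ('o,'m) fobj \<Rightarrow> nat \<Rightarrow> bool" where
  "constant_from C X M \<longleftrightarrow> (\<forall>k\<ge>M. fst X k = fst X M \<and> snd X k = idm C (fst X M))"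

definition splice_at :: "('o,'m) ccat \<Rightarrow> ('o,'m) fobj \<Rightarrow> nat \<Rightarrow> 'm \<Rightarrow> ('o,'m) fobj" where
  "splice_at C X M j = ((\<lambda>k. if k < M then fst X k else cod C j),
     (\<lambda>k. if Suc k < M then snd X k else if Suc k = M then comp C j (snd X k) else idm C (cod C j)))"

definition splice_in :: "('o,'m) ccat \<Rightarrow> ('o,'m) fobj \<Rightarrow> nat \<Rightarrow> 'm \<Rightarrow> ('o,'m) fmor" where
  "splice_in C X M j = \<lparr>fdom = X, fcod = splice_at C X M j,
     fcomp = (\<lambda>k. if k < M then idm C (fst X k) else j)\<rparr>"

definition splice_out :: "('o,'m) ccat \<Rightarrow> ('o,'m) fmor \<Rightarrow> nat \<Rightarrow> 'm \<Rightarrow> 'm \<Rightarrow> ('o,'m) fmor" where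
  "splice_out C f M j q = \<lparr>fdom = splice_at C (fdom f) M j, fcod = fcod f,
     fcomp = (\<lambda>k. if k < M then fcomp f k else comp C (transition C (fcod f) M (k - M)) q)\<rparr>"

lemma Fb_constant_from: "X \<in> Fb C \<Longrightarrow> \<exists>b. constant_from C X b"
  by (auto simp add: Fb_iff constant_from_def)

lemma constant_from_mono:
  assumes "constant_from C X b" and "b \<le> M"
  shows "constant_from C X M"
proof -
  have "fst X k = fst X b \<and> snd X k = idm C (fst X b)" if "b \<le> k" for k
    using assms(1) that unfolding constant_from_def by blast
  then show ?thesis
    unfolding constant_from_def using assms(2) by (metis order_trans)
qed

lemma splice_at_Fb: "splice_at C X M j \<in> fobjs C \<Longrightarrow> splice_at C X M j \<in> Fb C"
  unfolding Fb_iff by (intro conjI exI[of _ 0] exI[of _ M]) (simp_all add: splice_at_def)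

context zero_category
begin

lemma transition_constant_from:
  assumes X: "X \<in> fobjs C" and XM: "constant_from C X M" and k: "M \<le> k"
  shows "transition C X k d = idm C (fst X M)"
proof (induction d)
  case 0
  have "fst X k = fst X M"
    using XM k unfolding constant_from_def by blast
  then show ?case by simp
next
  case (Suc d)
  have "snd X (k + d) = idm C (fst X M)"
    using XM k unfolding constant_from_def by (meson le_add1 order_trans)
  then show ?case
    using Suc id_comp[OF id_in_hom[OF fobj_Obj[OF X]]] by simp
qed

lemma splice_at_fobj:
  assumes X: "X \<in> fobjs C" and j: "j \<in> hom C (fst X M) U"
  shows "splice_at C X M j \<in> fobjs C"
  unfolding fobjs_iff
proof
  fix n
  have U: "cod C j = U" "U \<in> Obj C" using homD[OF j] hom_Obj[OF j] by simp_all
  consider "Suc n < M" | "Suc n = M" | "M \<le> n" by linarith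
  then show "fst (splice_at C X M j) n \<in> Obj C \<and>
    snd (splice_at C X M j) n \<in> hom C (fst (splice_at C X M j) n) (fst (splice_at C X M j) (Suc n))"
  proof cases
    case 1
    then show ?thesis using fobj_Obj[OF X] fobj_hom[OF X] by (simp add: splice_at_def)
  next
    case 2
    then have "snd X n \<in> hom C (fst X n) (fst X M)"
      using fobj_hom[OF X, of n] by simp
    then have "comp C j (snd X n) \<in> hom C (fst X n) U"
      using comp_in_hom j by blast
    then show ?thesis using 2 fobj_Obj[OF X] U by (simp add: splice_at_def)
  next
    case 3
    then show ?thesis using id_in_hom U by (simp add: splice_at_def)
  qed
qed

lemma splice_in_Arr:
  assumes X: "X \<in> fobjs C" and XM: "constant_from C X M" and j: "j \<in> hom C (fst X M) U"
  shows "splice_in C X M j \<in> Arr (FC C)"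
proof -
  have U: "cod C j = U" using homD[OF j] by simp
  have X_eq: "fst X k = fst X M" "snd X k = idm C (fst X M)" if "M \<le> k" for k
    using XM that unfolding constant_from_def by blast+
  have hom: "fcomp (splice_in C X M j) k \<in> hom C (fst X k) (fst (splice_at C X M j) k)" for k
  proof (cases "k < M")
    case True
    then show ?thesis using id_in_hom[OF fobj_Obj[OF X]] by (simp add: splice_in_def splice_at_def)
  next
    case False
    then show ?thesis using j X_eq(1)[of k] by (simp add: splice_in_def splice_at_def U)
  qed
  have "comp C (snd (splice_at C X M j) k) (fcomp (splice_in C X M j) k)
      = comp C (fcomp (splice_in C X M j) (Suc k)) (snd X k)" for k
  proof -
    consider "Suc k < M" | "Suc k = M" | "M \<le> k" by linarith
    then show ?thesis
    proof cases
      case 1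
      then show ?thesis
        using comp_id[OF fobj_hom[OF X]] id_comp[OF fobj_hom[OF X]] by (simp add: splice_at_def splice_in_def)
    next
      case 2
      have "snd X k \<in> hom C (fst X k) (fst X M)"
        using fobj_hom[OF X, of k] 2 by simp
      then show ?thesis
        using 2 comp_id[OF comp_in_hom[OF _ j]] by (simp add: splice_at_def splice_in_def)
    next
      case 3
      then show ?thesis
        using id_comp[OF j] comp_id[OF j] X_eq(2)[of k] by (simp add: splice_at_def splice_in_def U)
    qed
  qed
  then show ?thesis
    using X splice_at_fobj[OF X j] hom by (simp add: Arr_FC_iff splice_in_def)
qed

lemma splice_out_Arr:
  assumes f: "f \<in> Arr (FC C)" and j: "j \<in> hom C (fst (fdom f) M) U"
    and q: "q \<in> hom C U (fst (fcod f) M)" and qj: "comp C q j = fcomp f M"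
  shows "splice_out C f M j q \<in> Arr (FC C)"
proof -
  note X = Arr_FCD(1)[OF f] and Y = Arr_FCD(2)[OF f]
  have U: "cod C j = U" using homD[OF j] by simp
  have tr: "transition C (fcod f) M (k - M) \<in> hom C (fst (fcod f) M) (fst (fcod f) k)" if "M \<le> k" for k
    using transition_in_hom[OF Y, of M "k - M"] that by simp
  have hom: "fcomp (splice_out C f M j q) k \<in> hom C (fst (splice_at C (fdom f) M j) k) (fst (fcod f) k)" for k
    using Arr_FCD(3)[OF f] comp_in_hom[OF q tr] by (simp add: splice_out_def splice_at_def U)
  have "comp C (snd (fcod f) k) (fcomp (splice_out C f M j q) k)
      = comp C (fcomp (splice_out C f M j q) (Suc k)) (snd (splice_at C (fdom f) M j) k)" for k
  proof -
    consider "Suc k < M" | "Suc k = M" | "M \<le> k" by linarith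
    then show ?thesis
    proof cases
      case 1
      then show ?thesis using Arr_FCD(4)[OF f] by (simp add: splice_out_def splice_at_def)
    next
      case 2
      have "snd (fdom f) k \<in> hom C (fst (fdom f) k) (fst (fdom f) M)"
        using fobj_hom[OF X, of k] 2 by simp
      then have "comp C (comp C q j) (snd (fdom f) k) = comp C q (comp C j (snd (fdom f) k))"
        using comp_assoc j q by metis
      then show ?thesis
        using 2 Arr_FCD(4)[OF f, of k] qj id_comp[OF q] by (simp add: splice_out_def splice_at_def)
    next
      case 3
      have "comp C (snd (fcod f) k) (comp C (transition C (fcod f) M (k - M)) q)
          = comp C (transition C (fcod f) M (Suc k - M)) q"
        using 3 comp_assoc[OF q tr[OF 3] fobj_hom[OF Y]] by (simp add: Suc_diff_le)
      then show ?thesis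
        using 3 comp_id[OF comp_in_hom[OF q tr[of "Suc k"]]] by (simp add: splice_out_def splice_at_def U)
    qed
  qed
  then show ?thesis
    using X Y splice_at_fobj[OF X j] hom by (simp add: Arr_FC_iff splice_out_def)
qed

lemma splice_out_comp_in:
  assumes f: "f \<in> Arr (FC C)" and XM: "constant_from C (fdom f) M" and j: "j \<in> hom C (fst (fdom f) M) U"
    and q: "q \<in> hom C U (fst (fcod f) M)" and qj: "comp C q j = fcomp f M"
  shows "comp (FC C) (splice_out C f M j q) (splice_in C (fdom f) M j) = f"
proof (rule fmor_eqI)
  fix k
  show "fcomp (comp (FC C) (splice_out C f M j q) (splice_in C (fdom f) M j)) k = fcomp f k"
  proof (cases "k < M")
    case True
    then show ?thesis using comp_id[OF Arr_FCD(3)[OF f]] by (simp add: splice_out_def splice_in_def)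
  next
    case False
    have tr: "transition C (fcod f) M (k - M) \<in> hom C (fst (fcod f) M) (fst (fcod f) k)"
      using transition_in_hom[OF Arr_FCD(2)[OF f], of M "k - M"] False by simp
    have "M \<le> k" using False by simp
    then have "fst (fdom f) k = fst (fdom f) M"
      using XM unfolding constant_from_def by blast
    then have "comp C (fcomp f k) (idm C (fst (fdom f) M)) = fcomp f k"
      using comp_id[OF Arr_FCD(3)[OF f, of k]] by simp
    moreover have "comp C (comp C (transition C (fcod f) M (k - M)) q) j
        = comp C (fcomp f k) (transition C (fdom f) M (k - M))"
      using comp_assoc[OF j q tr] qj transition_natural[OF f, of M "k - M"] False by simp
    ultimately show ?thesis
      using False transition_constant_from[OF Arr_FCD(1)[OF f] XM order_refl]
      by (simp add: splice_out_def splice_in_def)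
  qed
qed (simp_all add: splice_out_def splice_in_def)

end

context admissible_class
begin

lemma splice_out_wst:
  assumes p: "splice_out C f M j q \<in> Arr (FC C)" and Y: "\<forall>n\<ge>M. snd (fcod f) n \<in> w"
    and q: "q \<in> hom C U (fst (fcod f) M)" "q \<in> w"
  shows "splice_out C f M j q \<in> wst C w"
proof -
  have Y': "fcod f \<in> fobjs C" using Arr_FCD(2)[OF p] by (simp add: splice_out_def)
  have "comp C (transition C (fcod f) M (k - M)) q \<in> w" if "M \<le> k" for k
    using w_comp[OF q(1) transition_in_hom[OF Y'] q(2) transition_in_w[OF Y' Y order_refl]] that
    by simp
  then have "\<forall>k\<ge>M. fcomp (splice_out C f M j q) k \<in> w"
    by (simp add: splice_out_def)
  then show ?thesis
    using p by (auto simp add: wst_iff eventually_sequentially)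
qed

lemma factorization_Fb:
  assumes cofs: "cofs C \<subseteq> Arr C" "\<And>x. x \<in> Obj C \<Longrightarrow> idm C x \<in> cofs C"
    and fax: "factorization_axiom C w"
    and f: "f \<in> Arr (FC C)" "fdom f \<in> Fb C" "fcod f \<in> Fwb C w"
  shows "\<exists>i p u. i \<in> cofs (FC C) \<and> p \<in> Arr (FC C) \<and> p \<in> wst C w \<and>
    fdom i = fdom f \<and> fcod i = u \<and> fdom p = u \<and> fcod p = fcod f \<and> u \<in> Fb C \<and> comp (FC C) p i = f"
proof -
  obtain b where b: "constant_from C (fdom f) b"
    using Fb_constant_from[OF f(2)] by blast
  obtain N where N: "\<forall>n\<ge>N. snd (fcod f) n \<in> w"
    using f(3) by (auto simp add: Fwb_iff eventually_sequentially)
  define M where "M = max b N"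
  have XM: "constant_from C (fdom f) M"
    using constant_from_mono[OF b] by (simp add: M_def)
  have YM: "\<forall>n\<ge>M. snd (fcod f) n \<in> w"
    using N by (simp add: M_def)
  have fM: "fcomp f M \<in> Arr C" "dom C (fcomp f M) = fst (fdom f) M" "cod C (fcomp f M) = fst (fcod f) M"
    using homD[OF Arr_FCD(3)[OF f(1)]] by simp_all
  obtain j q where j: "j \<in> cofs C" and q: "q \<in> w" "q \<in> Arr C" and jq_ends: "dom C j = fst (fdom f) M"
    "cod C j = dom C q" "cod C q = fst (fcod f) M" and qj: "comp C q j = fcomp f M"
    using fax fM unfolding factorization_axiom_def by metis
  have j_hom: "j \<in> hom C (fst (fdom f) M) (cod C j)"
    using j cofs(1) jq_ends by (auto simp add: hom_def)
  have q_hom: "q \<in> hom C (cod C j) (fst (fcod f) M)"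
    using q jq_ends by (simp add: hom_def)
  have "splice_in C (fdom f) M j \<in> cofs (FC C)"
    using splice_in_Arr[OF Arr_FCD(1)[OF f(1)] XM j_hom] j cofs(2) fobj_Obj[OF Arr_FCD(1)[OF f(1)]]
    by (simp add: cofs_FC_iff splice_in_def)
  moreover have "splice_out C f M j q \<in> Arr (FC C)"
    by (rule splice_out_Arr[OF f(1) j_hom q_hom qj])
  moreover have "splice_at C (fdom f) M j \<in> Fb C"
    by (rule splice_at_Fb[OF splice_at_fobj[OF Arr_FCD(1)[OF f(1)] j_hom]])
  ultimately show ?thesis
    using splice_out_wst[OF _ YM q_hom q(1)] splice_out_comp_in[OF f(1) XM j_hom q_hom qj]
    by (intro exI[of _ "splice_in C (fdom f) M j"] exI[of _ "splice_out C f M j q"])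
      (simp add: splice_in_def splice_out_def)
qed

end

theorem lemma2p8:
  fixes C :: "('o,'m) ccat" and w :: "'m set"
  assumes "is_additive_cat_with_cof C"
    and "admissible C w"
    and "factorization_axiom C w"
  shows
    "(admissible (FwbC C w) (wst C w \<inter> Arr (FwbC C w)) \<and>
      lw C w \<inter> Arr (FwbC C w) \<subseteq> wst C w \<inter> Arr (FwbC C w) \<and>
      Theta (Fwb C w) \<subseteq> wst C w \<inter> Arr (FwbC C w) \<and>
      (\<forall>W. admissible (FwbC C w) W \<and> lw C w \<inter> Arr (FwbC C w) \<subseteq> W \<and> Theta (Fwb C w) \<subseteq> W
            \<longrightarrow> wst C w \<inter> Arr (FwbC C w) \<subseteq> W))
   \<and>
     (wst_serre C w (Fwb C w) \<and> jconst C ` Obj C \<subseteq> Fwb C w \<and>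
      (\<forall>S. wst_serre C w S \<and> jconst C ` Obj C \<subseteq> S \<longrightarrow> Fwb C w \<subseteq> S))
   \<and>
     (\<forall>f\<in>Arr (FwbC C w). fdom f \<in> Fb C \<longrightarrow>
        (\<exists>i p u. i \<in> cofs (FC C) \<and> p \<in> Arr (FC C) \<and> p \<in> wst C w \<and>
           fdom i = fdom f \<and> fcod i = u \<and> fdom p = u \<and> fcod p = fcod f \<and>
           u \<in> Fb C \<and> comp (FC C) p i = f))"
proof -
  interpret admissible_class C w
    using assms(1,2) by unfold_locales (simp_all add: is_additive_cat_with_cof_def is_additive_def)
  have cofs: "cofs C \<subseteq> Arr C" "\<And>x. x \<in> Obj C \<Longrightarrow> idm C x \<in> cofs C"
    using assms(1) id_is_iso unfolding is_additive_cat_with_cof_def is_cat_with_cof_def by blast+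
  have admissible: "admissible (FwbC C w) (wst C w \<inter> Arr (FwbC C w))"
    unfolding FwbC_def using Fwb_fobjs zero_Fwb upto_obj_Fwb by (rule admissible_wst_fullsub)
  have "lw C w \<inter> Arr (FwbC C w) \<subseteq> wst C w \<inter> Arr (FwbC C w)"
    by (auto simp add: lw_def wst_iff)
  moreover have "Theta (Fwb C w) \<subseteq> wst C w \<inter> Arr (FwbC C w)"
    using theta_wst_FwbC by (auto simp add: Theta_def)
  moreover have "\<forall>W. admissible (FwbC C w) W \<and> lw C w \<inter> Arr (FwbC C w) \<subseteq> W \<and> Theta (Fwb C w) \<subseteq> W
      \<longrightarrow> wst C w \<inter> Arr (FwbC C w) \<subseteq> W"
    using wst_minimal by blast
  moreover have "\<forall>S. wst_serre C w S \<and> jconst C ` Obj C \<subseteq> S \<longrightarrow> Fwb C w \<subseteq> S"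
    using Fwb_minimal by blast
  moreover have "\<forall>f\<in>Arr (FwbC C w). fdom f \<in> Fb C \<longrightarrow>
      (\<exists>i p u. i \<in> cofs (FC C) \<and> p \<in> Arr (FC C) \<and> p \<in> wst C w \<and>
         fdom i = fdom f \<and> fcod i = u \<and> fdom p = u \<and> fcod p = fcod f \<and> u \<in> Fb C \<and> comp (FC C) p i = f)"
    using factorization_Fb[OF cofs assms(3)] by (simp add: FwbC_def)
  ultimately show ?thesis
    using admissible wst_serre_Fwb jconst_Fwb by (intro conjI) assumption+
qed

end
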